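(* Let $\mathbb{K}$ be a field, $m\ge 3$, $R=\mathbb{K}[T_1,\dots,T_m]$, and $I=\langle T_1^{a_1},\dots,T_m^{a_m},T_1^{b_1}\cdots T_m^{b_m}\rangle$ with $0\le b_i<a_i$ for all $i$ and $b_i\ne0$ for at least two $i$; let $L\subset S=R[X_1,\dots,X_m,W]$ be the defining ideal of its Rees algebra. Let $\mathcal{C}\subset\{\mathbf{c}\in\mathbb{N}^m\mid |\mathbf{c}|\ge2\}$ be a finite set such that $\Gamma_0\cup\{\mathcal{P}(W^{|\mathbf{c}|},\mathbf{X}^{\mathbf{c}})\mid \mathbf{c}\in\mathcal{C}\}$ is a Gröbner basis of $L$ with respect to $\tau$, and such that $\mathcal{C}$ is closed: if $\mathbf{c}\in\mathcal{C}$, $|\mathbf{c}'|\ge 2$ and $\mathbf{c}'\prec_{\tau'}\mathbf{c}$, then $\mathbf{c}'\in\mathcal{C}$. Order $\mathcal{C}=\{\mathbf{c}_1\prec_{\tau'}\cdots\prec_{\tau'}\mathbf{c}_N\}$ and for $0\le j\le N$ set $\Theta_j=\Gamma_0\cup\{\mathcal{P}(W^{|\mathbf{c}_i|},\mathbf{X}^{\mathbf{c}_i})\mid 1\le i\le j\}$ and $\mathcal{H}_j=\langle\Theta_j\rangle$. Then for every $0\le j\le N$, $\Theta_j$ is a Gröbner basis of $\mathcal{H}_j$ with respect to $\tau$.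
   Context: Write $\mathbf{T}^{\mathbf{b}}=T_1^{b_1}\cdots T_m^{b_m}$. $L$ is the kernel of the $R$-algebra map $S\to R[Z]$, $X_i\mapsto T_i^{a_i}Z$, $W\mapsto\mathbf{T}^{\mathbf{b}}Z$. Set $X_{m+1}:=W$; for $\mathbf{c}\in\mathbb{N}^m$, $\mathbf{X}^{\mathbf{c}}=\prod X_i^{c_i}$ and $|\mathbf{c}|=\sum c_i$. Let $\Psi:S\to R$ be the $R$-algebra map $X_i\mapsto T_i^{a_i}$, $W\mapsto\mathbf{T}^{\mathbf{b}}$. For monomials $M,N$ in $X_1,\dots,X_m,W$, with $g=\gcd(\Psi(M),\Psi(N))$, set $\mathcal{P}(M,N)=\frac{\Psi(N)}{g}M-\frac{\Psi(M)}{g}N$. $\Gamma_0=\{\mathcal{P}(X_i,X_j)\mid 1\le j<i\le m+1\}$. The order $\tau$ is lex on $S$ with $W>X_m>\cdots>X_1>T_1>\cdots>T_m$. The total order $\tau'$ on $\mathbb{N}^m$: $\boldsymbol\alpha\prec_{\tau'}\boldsymbol\beta$ iff $|\boldsymbol\alpha|<|\boldsymbol\beta|$, or $|\boldsymbol\alpha|=|\boldsymbol\beta|$ and there is $i_0$ with $\alpha_{i_0}>\beta_{i_0}$ and $\alpha_i=\beta_i$ for all $i>i_0$. *)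

theory Defs
  imports "HOL-Library.Poly_Mapping"
begin

text \<open>Variables: T i (1 \<le> i \<le> m), X i (1 \<le> i \<le> m+1, where X (m+1) is W),
  and an extra variable Zv used only for the target ring R[Z].\<close>
datatype var = T nat | X nat | Zv

type_synonym mono = "var \<Rightarrow>\<^sub>0 nat"
type_synonym 'k mpoly = "mono \<Rightarrow>\<^sub>0 'k"

definition Wvar :: "nat \<Rightarrow> var" where "Wvar m = X (Suc m)"

definition vars_S :: "nat \<Rightarrow> var set" where
  "vars_S m = {T i | i. 1 \<le> i \<and> i \<le> m} \<union> {X i | i. 1 \<le> i \<and> i \<le> Suc m}"

definition vars_RZ :: "nat \<Rightarrow> var set" where
  "vars_RZ m = {T i | i. 1 \<le> i \<and> i \<le> m} \<union> {Zv}"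

definition S_ring :: "nat \<Rightarrow> ('k::field) mpoly set" where
  "S_ring m = Collect (\<lambda>p. \<forall>\<alpha>\<in>Poly_Mapping.keys p. Poly_Mapping.keys \<alpha> \<subseteq> vars_S m)"

definition RZ_ring :: "nat \<Rightarrow> ('k::field) mpoly set" where
  "RZ_ring m = Collect (\<lambda>p. \<forall>\<alpha>\<in>Poly_Mapping.keys p. Poly_Mapping.keys \<alpha> \<subseteq> vars_RZ m)"

definition monom :: "mono \<Rightarrow> ('k::field) mpoly" where
  "monom \<alpha> = Poly_Mapping.single \<alpha> 1"

definition subst :: "(var \<Rightarrow> ('k::field) mpoly) \<Rightarrow> 'k mpoly \<Rightarrow> 'k mpoly" where
  "subst \<sigma> p = (\<Sum>\<alpha>\<in>Poly_Mapping.keys p. Poly_Mapping.single 0 (Poly_Mapping.lookup p \<alpha>) *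
                   (\<Prod>v\<in>Poly_Mapping.keys \<alpha>. \<sigma> v ^ Poly_Mapping.lookup \<alpha> v))"

definition Tmono :: "nat \<Rightarrow> (nat \<Rightarrow> nat) \<Rightarrow> mono" where
  "Tmono m e = (\<Sum>i\<in>{1..m}. Poly_Mapping.single (T i) (e i))"

definition Xmono :: "nat \<Rightarrow> (nat \<Rightarrow> nat) \<Rightarrow> mono" where
  "Xmono m c = (\<Sum>i\<in>{1..m}. Poly_Mapping.single (X i) (c i))"

definition Wpow :: "nat \<Rightarrow> nat \<Rightarrow> mono" where
  "Wpow m k = Poly_Mapping.single (Wvar m) k"

definition rees_sigma :: "nat \<Rightarrow> (nat \<Rightarrow> nat) \<Rightarrow> (nat \<Rightarrow> nat) \<Rightarrow> var \<Rightarrow> ('k::field) mpoly" where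
  "rees_sigma m a b v = (case v of
      T i \<Rightarrow> monom (Poly_Mapping.single (T i) 1)
    | X i \<Rightarrow> (if i = Suc m then monom (Tmono m b + Poly_Mapping.single Zv 1)
              else monom (Poly_Mapping.single (T i) (a i) + Poly_Mapping.single Zv 1))
    | Zv \<Rightarrow> monom (Poly_Mapping.single Zv 1))"

definition rees_L :: "nat \<Rightarrow> (nat \<Rightarrow> nat) \<Rightarrow> (nat \<Rightarrow> nat) \<Rightarrow> ('k::field) mpoly set" where
  "rees_L m a b = {p \<in> S_ring m. subst (rees_sigma m a b) p = 0}"

text \<open>Exponent of T_i in \<Psi>(M), for a monomial M in X_1..X_m,W.\<close>
definition psi_exp :: "nat \<Rightarrow> (nat \<Rightarrow> nat) \<Rightarrow> (nat \<Rightarrow> nat) \<Rightarrow> mono \<Rightarrow> nat \<Rightarrow> nat" where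
  "psi_exp m a b M i = Poly_Mapping.lookup M (X i) * a i + Poly_Mapping.lookup M (Wvar m) * b i"

text \<open>\<P>(M,N) = (\<Psi>(N)/g) M - (\<Psi>(M)/g) N with g = gcd(\<Psi>(M),\<Psi>(N)) (componentwise min).\<close>
definition Pcal :: "nat \<Rightarrow> (nat \<Rightarrow> nat) \<Rightarrow> (nat \<Rightarrow> nat) \<Rightarrow> mono \<Rightarrow> mono \<Rightarrow> ('k::field) mpoly" where
  "Pcal m a b M N =
     (let pM = psi_exp m a b M; pN = psi_exp m a b N;
          g = (\<lambda>i. min (pM i) (pN i))
      in monom (Tmono m (\<lambda>i. pN i - g i) + M) - monom (Tmono m (\<lambda>i. pM i - g i) + N))"

definition Gamma0 :: "nat \<Rightarrow> (nat \<Rightarrow> nat) \<Rightarrow> (nat \<Rightarrow> nat) \<Rightarrow> ('k::field) mpoly set" where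
  "Gamma0 m a b = {Pcal m a b (Poly_Mapping.single (X i) 1) (Poly_Mapping.single (X j) 1)
                    | i j. 1 \<le> j \<and> j < i \<and> i \<le> Suc m}"

definition Pc :: "nat \<Rightarrow> (nat \<Rightarrow> nat) \<Rightarrow> (nat \<Rightarrow> nat) \<Rightarrow> (nat \<Rightarrow> nat) \<Rightarrow> ('k::field) mpoly" where
  "Pc m a b c = Pcal m a b (Wpow m (\<Sum>i\<in>{1..m}. c i)) (Xmono m c)"

definition ideal_S :: "nat \<Rightarrow> ('k::field) mpoly set \<Rightarrow> 'k mpoly set" where
  "ideal_S m G = {p. \<exists>F q. finite F \<and> F \<subseteq> G \<and> (\<forall>g\<in>F. q g \<in> S_ring m) \<and> p = (\<Sum>g\<in>F. q g * g)}"

text \<open>Ranking of variables: W > X_m > ... > X_1 > T_1 > ... > T_m.\<close>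
definition var_rank :: "nat \<Rightarrow> var \<Rightarrow> nat" where
  "var_rank m v = (case v of T i \<Rightarrow> Suc m - i | X i \<Rightarrow> m + i | Zv \<Rightarrow> 0)"

definition lex_less :: "nat \<Rightarrow> mono \<Rightarrow> mono \<Rightarrow> bool" where
  "lex_less m \<alpha> \<beta> \<longleftrightarrow> (\<exists>v\<in>vars_S m. Poly_Mapping.lookup \<alpha> v < Poly_Mapping.lookup \<beta> v \<and>
       (\<forall>w\<in>vars_S m. var_rank m v < var_rank m w \<longrightarrow> Poly_Mapping.lookup \<alpha> w = Poly_Mapping.lookup \<beta> w))"

definition lead_mono :: "nat \<Rightarrow> ('k::field) mpoly \<Rightarrow> mono" where
  "lead_mono m p = (THE \<alpha>. \<alpha> \<in> Poly_Mapping.keys p \<and> (\<forall>\<beta>\<in>Poly_Mapping.keys p. \<beta> \<noteq> \<alpha> \<longrightarrow> lex_less m \<beta> \<alpha>))"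

definition init_ideal :: "nat \<Rightarrow> ('k::field) mpoly set \<Rightarrow> 'k mpoly set" where
  "init_ideal m H = ideal_S m {monom (lead_mono m f) | f. f \<in> H \<and> f \<noteq> 0}"

definition is_groebner_basis :: "nat \<Rightarrow> ('k::field) mpoly set \<Rightarrow> 'k mpoly set \<Rightarrow> bool" where
  "is_groebner_basis m G H \<longleftrightarrow> G \<subseteq> H \<and> init_ideal m H = init_ideal m G"

definition in_Nm :: "nat \<Rightarrow> (nat \<Rightarrow> nat) \<Rightarrow> bool" where
  "in_Nm m c \<longleftrightarrow> (\<forall>i. (i < 1 \<or> m < i) \<longrightarrow> c i = 0)"

definition vabs :: "nat \<Rightarrow> (nat \<Rightarrow> nat) \<Rightarrow> nat" where
  "vabs m c = (\<Sum>i\<in>{1..m}. c i)"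

definition tau'_less :: "nat \<Rightarrow> (nat \<Rightarrow> nat) \<Rightarrow> (nat \<Rightarrow> nat) \<Rightarrow> bool" where
  "tau'_less m \<alpha> \<beta> \<longleftrightarrow> vabs m \<alpha> < vabs m \<beta> \<or>
     (vabs m \<alpha> = vabs m \<beta> \<and> (\<exists>i0\<in>{1..m}. \<alpha> i0 > \<beta> i0 \<and> (\<forall>i\<in>{i0<..m}. \<alpha> i = \<beta> i)))"

end

theory Submission
  imports Defs
begin

(* All generators are binomials X^mu - X^nu with nu <_tau mu, so Gamma0 together with the
   P(W^|c|, X^c), c in an initial segment D of C, defines a rewriting system on monomials, and
   these binomials are a Groebner basis of the ideal they generate once the rewriting is confluent.
   It terminates, since the weight sum_s s * deg_{X_s} drops in every step, so by Newman's lemma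
   it suffices to join critical pairs. Coprime pairs are trivial. The S-pair of
   T_l^{a_l} X_i - T_i^{a_i} X_l and P_c rewrites in one step by P_{c'}, c' = c + e_i - e_l, which
   precedes c in tau' and therefore lies in D. In all other cases both ends of the critical pair
   have the same image in the Rees algebra and W-degree smaller than |c| for some c in D (or at
   most 1): as C gives a Groebner basis of L, C-normal forms are unique in each fibre of the Rees
   map, and C-reduction of such monomials only involves elements of D. *)

definition S_mono :: "nat \<Rightarrow> mono \<Rightarrow> bool" where
  "S_mono m \<alpha> \<longleftrightarrow> Poly_Mapping.keys \<alpha> \<subseteq> vars_S m"

lemma S_ring_iff: "p \<in> S_ring m \<longleftrightarrow> (\<forall>\<alpha>\<in>Poly_Mapping.keys p. S_mono m \<alpha>)"
  unfolding S_ring_def S_mono_def by auto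

lemma S_mono_add: "S_mono m s \<Longrightarrow> S_mono m t \<Longrightarrow> S_mono m (s + t)"
  using keys_add[of s t] unfolding S_mono_def by auto

lemma S_mono_diff: "S_mono m s \<Longrightarrow> S_mono m (s - t)"
  unfolding S_mono_def by (auto simp: in_keys_iff lookup_minus)

lemma S_mono_addD: "S_mono m (s + t) \<Longrightarrow> S_mono m s"
  unfolding S_mono_def by (auto simp: in_keys_iff lookup_add)

lemma finite_vars_S: "finite (vars_S m)"
proof -
  have "vars_S m \<subseteq> T ` {1..m} \<union> X ` {1..Suc m}"
    unfolding vars_S_def by auto
  then show ?thesis
    by (rule finite_subset) auto
qed

lemma inj_on_var_rank: "inj_on (var_rank m) (vars_S m)"
  unfolding inj_on_def vars_S_def var_rank_def by auto

lemma lex_less_irrefl: "\<not> lex_less m \<alpha> \<alpha>"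
  unfolding lex_less_def by auto

lemma lex_less_trans:
  assumes "lex_less m \<alpha> \<beta>" "lex_less m \<beta> \<gamma>"
  shows "lex_less m \<alpha> \<gamma>"
proof -
  obtain v where v: "v \<in> vars_S m" "Poly_Mapping.lookup \<alpha> v < Poly_Mapping.lookup \<beta> v"
    "\<forall>w\<in>vars_S m. var_rank m v < var_rank m w \<longrightarrow> Poly_Mapping.lookup \<alpha> w = Poly_Mapping.lookup \<beta> w"
    using assms(1) unfolding lex_less_def by blast
  obtain u where u: "u \<in> vars_S m" "Poly_Mapping.lookup \<beta> u < Poly_Mapping.lookup \<gamma> u"
    "\<forall>w\<in>vars_S m. var_rank m u < var_rank m w \<longrightarrow> Poly_Mapping.lookup \<beta> w = Poly_Mapping.lookup \<gamma> w"
    using assms(2) unfolding lex_less_def by blast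
  define z where "z = (if var_rank m v < var_rank m u then u else v)"
  have "v = u" if "var_rank m v = var_rank m u"
    using inj_on_var_rank v(1) u(1) that by (auto dest: inj_onD)
  then have "z \<in> vars_S m \<and> Poly_Mapping.lookup \<alpha> z < Poly_Mapping.lookup \<gamma> z \<and>
      (\<forall>w\<in>vars_S m. var_rank m z < var_rank m w \<longrightarrow> Poly_Mapping.lookup \<alpha> w = Poly_Mapping.lookup \<gamma> w)"
    unfolding z_def using u v by (cases "var_rank m v < var_rank m u") (force, force)
  then show ?thesis
    unfolding lex_less_def by blast
qed

lemma lex_less_asym: "lex_less m \<alpha> \<beta> \<Longrightarrow> \<not> lex_less m \<beta> \<alpha>"
  using lex_less_trans lex_less_irrefl by blast

lemma lex_less_add_left: "lex_less m \<alpha> \<beta> \<Longrightarrow> lex_less m (t + \<alpha>) (t + \<beta>)"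
  unfolding lex_less_def by (auto simp: lookup_add)

lemma lex_less_total:
  assumes "S_mono m \<alpha>" "S_mono m \<beta>" "\<alpha> \<noteq> \<beta>"
  shows "lex_less m \<alpha> \<beta> \<or> lex_less m \<beta> \<alpha>"
proof -
  define Diff where "Diff = {v \<in> vars_S m. Poly_Mapping.lookup \<alpha> v \<noteq> Poly_Mapping.lookup \<beta> v}"
  have "Diff \<noteq> {}"
  proof
    assume "Diff = {}"
    have "Poly_Mapping.lookup \<alpha> v = Poly_Mapping.lookup \<beta> v" for v
    proof (cases "v \<in> vars_S m")
      case False
      then show ?thesis
        using assms(1,2) unfolding S_mono_def by (metis in_keys_iff subsetD)
    qed (use \<open>Diff = {}\<close> Diff_def in auto)
    then show False
      using assms(3) poly_mapping_eqI by blast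
  qed
  moreover have "finite Diff"
    unfolding Diff_def using finite_vars_S by auto
  ultimately obtain v where v: "v \<in> Diff" "\<forall>w\<in>Diff. var_rank m w \<le> var_rank m v"
    using Max_in[of "var_rank m ` Diff"] Max_ge[of "var_rank m ` Diff"] by fastforce
  then have "\<forall>w\<in>vars_S m. var_rank m v < var_rank m w \<longrightarrow> Poly_Mapping.lookup \<alpha> w = Poly_Mapping.lookup \<beta> w"
    unfolding Diff_def by force
  moreover have "v \<in> vars_S m" "Poly_Mapping.lookup \<alpha> v \<noteq> Poly_Mapping.lookup \<beta> v"
    using v(1) unfolding Diff_def by auto
  ultimately show ?thesis
    unfolding lex_less_def by (metis linorder_neqE_nat)
qed

lemma lex_max_exists:
  assumes "finite A" "A \<noteq> {}" "\<forall>\<alpha>\<in>A. S_mono m \<alpha>"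
  shows "\<exists>\<alpha>\<in>A. \<forall>\<beta>\<in>A. \<beta> \<noteq> \<alpha> \<longrightarrow> lex_less m \<beta> \<alpha>"
  using assms
proof (induction A rule: finite_ne_induct)
  case (insert x A)
  then obtain \<alpha> where \<alpha>: "\<alpha> \<in> A" "\<forall>\<beta>\<in>A. \<beta> \<noteq> \<alpha> \<longrightarrow> lex_less m \<beta> \<alpha>"
    by auto
  have "x \<noteq> \<alpha>"
    using insert.hyps \<alpha>(1) by auto
  then consider "lex_less m x \<alpha>" | "lex_less m \<alpha> x"
    using lex_less_total insert.prems \<alpha>(1) by blast
  then show ?case
  proof cases
    case 1
    then show ?thesis using \<alpha> by auto
  next
    case 2
    have "lex_less m \<beta> x" if "\<beta> \<in> A" for \<beta>
      using 2 \<alpha> lex_less_trans that by (cases "\<beta> = \<alpha>") auto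
    then show ?thesis
      by blast
  qed
qed simp

lemma lead_mono_max:
  assumes "p \<in> S_ring m" "p \<noteq> 0"
  shows lead_mono_in_keys: "lead_mono m p \<in> Poly_Mapping.keys p"
    and lex_less_lead_mono:
      "\<And>\<beta>. \<beta> \<in> Poly_Mapping.keys p \<Longrightarrow> \<beta> \<noteq> lead_mono m p \<Longrightarrow> lex_less m \<beta> (lead_mono m p)"
proof -
  let ?max = "\<lambda>\<alpha>. \<alpha> \<in> Poly_Mapping.keys p \<and> (\<forall>\<beta>\<in>Poly_Mapping.keys p. \<beta> \<noteq> \<alpha> \<longrightarrow> lex_less m \<beta> \<alpha>)"
  obtain \<alpha> where "?max \<alpha>"
    using lex_max_exists[of "Poly_Mapping.keys p" m] assms unfolding S_ring_iff by auto
  moreover have "\<gamma> = \<alpha>" if "?max \<gamma>" for \<gamma>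
  proof (rule ccontr)
    assume "\<gamma> \<noteq> \<alpha>"
    then have "lex_less m \<gamma> \<alpha>" "lex_less m \<alpha> \<gamma>"
      using \<open>?max \<alpha>\<close> that by auto
    then show False
      using lex_less_asym by blast
  qed
  ultimately have "?max (lead_mono m p)"
    unfolding lead_mono_def by (rule theI)
  then show "lead_mono m p \<in> Poly_Mapping.keys p"
    and "\<And>\<beta>. \<beta> \<in> Poly_Mapping.keys p \<Longrightarrow> \<beta> \<noteq> lead_mono m p \<Longrightarrow> lex_less m \<beta> (lead_mono m p)"
    by auto
qed

definition binom :: "mono \<Rightarrow> mono \<Rightarrow> ('k::field) mpoly" where
  "binom \<mu> \<nu> = monom \<mu> - monom \<nu>"

definition binomials :: "(mono \<times> mono) set \<Rightarrow> ('k::field) mpoly set" where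
  "binomials P = (\<lambda>(\<mu>, \<nu>). binom \<mu> \<nu>) ` P"

lemma keys_binom:
  assumes "\<mu> \<noteq> \<nu>"
  shows "Poly_Mapping.keys (binom \<mu> \<nu> :: ('k::field) mpoly) = {\<mu>, \<nu>}"
proof (intro set_eqI)
  fix x
  show "x \<in> Poly_Mapping.keys (binom \<mu> \<nu> :: 'k mpoly) \<longleftrightarrow> x \<in> {\<mu>, \<nu>}"
    using assms unfolding binom_def monom_def in_keys_iff lookup_minus lookup_single
    by (cases "x = \<mu>"; cases "x = \<nu>") auto
qed

lemma binom_nonzero: "\<mu> \<noteq> \<nu> \<Longrightarrow> (binom \<mu> \<nu> :: ('k::field) mpoly) \<noteq> 0"
  using keys_binom[where 'k='k] by fastforce

lemma binom_in_S_ring: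
  assumes "S_mono m \<mu>" "S_mono m \<nu>"
  shows "(binom \<mu> \<nu> :: ('k::field) mpoly) \<in> S_ring m"
  using assms keys_binom[of \<mu> \<nu>, where 'k='k]
  unfolding S_ring_iff by (cases "\<mu> = \<nu>") (auto simp: binom_def)

lemma lead_mono_binom:
  assumes "S_mono m \<mu>" "S_mono m \<nu>" "lex_less m \<nu> \<mu>"
  shows "lead_mono m (binom \<mu> \<nu> :: ('k::field) mpoly) = \<mu>"
proof -
  have "\<mu> \<noteq> \<nu>"
    using assms(3) lex_less_irrefl by metis
  let ?p = "binom \<mu> \<nu> :: 'k mpoly"
  have in_S: "?p \<in> S_ring m" and nz: "?p \<noteq> 0"
    using binom_in_S_ring[OF assms(1,2)] binom_nonzero[OF \<open>\<mu> \<noteq> \<nu>\<close>] by auto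
  have "lead_mono m ?p \<in> {\<mu>, \<nu>}"
    using lead_mono_in_keys[OF in_S nz] keys_binom[OF \<open>\<mu> \<noteq> \<nu>\<close>, where 'k='k] by simp
  moreover have "lead_mono m ?p \<noteq> \<nu>"
  proof
    assume "lead_mono m ?p = \<nu>"
    then have "lex_less m \<mu> \<nu>"
      using lex_less_lead_mono[OF in_S nz, of \<mu>] keys_binom[OF \<open>\<mu> \<noteq> \<nu>\<close>, where 'k='k] \<open>\<mu> \<noteq> \<nu>\<close> by simp
    then show False
      using assms(3) lex_less_asym by blast
  qed
  ultimately show ?thesis
    by blast
qed

lemma S_ring_zero: "0 \<in> S_ring m"
  unfolding S_ring_def by simp

lemma S_ring_one: "1 \<in> S_ring m"
  unfolding S_ring_iff S_mono_def by simp

lemma S_ring_add: "p \<in> S_ring m \<Longrightarrow> q \<in> S_ring m \<Longrightarrow> p + q \<in> S_ring m"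
  using keys_add[of p q] unfolding S_ring_iff by blast

lemma S_ring_mult: "p \<in> S_ring m \<Longrightarrow> q \<in> S_ring m \<Longrightarrow> p * q \<in> S_ring m"
  using keys_mult[of p q] S_mono_add unfolding S_ring_iff by blast

lemma monom_in_S_ring: "S_mono m t \<Longrightarrow> (monom t :: ('k::field) mpoly) \<in> S_ring m"
  unfolding S_ring_iff monom_def by simp

lemma ideal_S_induct [consumes 1, case_names zero add mult]:
  assumes "p \<in> ideal_S m G"
    and "P 0"
    and "\<And>p q. P p \<Longrightarrow> P q \<Longrightarrow> P (p + q)"
    and "\<And>q g. q \<in> S_ring m \<Longrightarrow> g \<in> G \<Longrightarrow> P (q * g)"
  shows "P p"
proof -
  obtain F q where F: "finite F" "F \<subseteq> G" "\<forall>g\<in>F. q g \<in> S_ring m" "p = (\<Sum>g\<in>F. q g * g)"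
    using assms(1) unfolding ideal_S_def by blast
  have "P (\<Sum>g\<in>F'. q g * g)" if "F' \<subseteq> F" for F'
    using finite_subset[OF that F(1)] that
    by (induction F' rule: finite_induct) (use F assms(2-4) in auto)
  then show ?thesis
    using F(4) by blast
qed

lemma generator_in_ideal_S: "g \<in> G \<Longrightarrow> g \<in> ideal_S m G"
  unfolding ideal_S_def
  by (intro CollectI exI[of _ "{g}"] exI[of _ "\<lambda>_. 1"]) (simp add: S_ring_one)

lemma ideal_S_zero: "0 \<in> ideal_S m G"
  unfolding ideal_S_def by (intro CollectI exI[of _ "{}"]) simp

lemma ideal_S_add:
  assumes "p \<in> ideal_S m G" "p' \<in> ideal_S m G"
  shows "p + p' \<in> ideal_S m G"
proof -
  obtain F q where F: "finite F" "F \<subseteq> G" "\<forall>g\<in>F. q g \<in> S_ring m" "p = (\<Sum>g\<in>F. q g * g)"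
    using assms(1) unfolding ideal_S_def by blast
  obtain F' q' where F': "finite F'" "F' \<subseteq> G" "\<forall>g\<in>F'. q' g \<in> S_ring m" "p' = (\<Sum>g\<in>F'. q' g * g)"
    using assms(2) unfolding ideal_S_def by blast
  define r where "r g = (if g \<in> F then q g else 0) + (if g \<in> F' then q' g else 0)" for g
  have "p = (\<Sum>g\<in>F \<union> F'. (if g \<in> F then q g else 0) * g)"
    unfolding F(4) by (rule sum.mono_neutral_cong_left) (use F F' in auto)
  moreover have "p' = (\<Sum>g\<in>F \<union> F'. (if g \<in> F' then q' g else 0) * g)"
    unfolding F'(4) by (rule sum.mono_neutral_cong_left) (use F F' in auto)
  ultimately have "p + p' = (\<Sum>g\<in>F \<union> F'. r g * g)"
    unfolding r_def by (simp add: sum.distrib distrib_right)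
  moreover have "\<forall>g\<in>F \<union> F'. r g \<in> S_ring m"
    unfolding r_def using F(3) F'(3) by (auto intro!: S_ring_add simp: S_ring_zero)
  ultimately show ?thesis
    unfolding ideal_S_def using F F' by (intro CollectI exI[of _ "F \<union> F'"] exI[of _ r]) simp
qed

lemma ideal_S_mult_left:
  assumes "r \<in> S_ring m" "p \<in> ideal_S m G"
  shows "r * p \<in> ideal_S m G"
proof -
  obtain F q where F: "finite F" "F \<subseteq> G" "\<forall>g\<in>F. q g \<in> S_ring m" "p = (\<Sum>g\<in>F. q g * g)"
    using assms(2) unfolding ideal_S_def by blast
  have "r * p = (\<Sum>g\<in>F. (r * q g) * g)"
    unfolding F(4) by (simp add: sum_distrib_left mult.assoc)
  moreover have "\<forall>g\<in>F. r * q g \<in> S_ring m"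
    using F(3) assms(1) S_ring_mult by blast
  ultimately show ?thesis
    unfolding ideal_S_def using F by (intro CollectI exI[of _ F] exI[of _ "\<lambda>g. r * q g"]) simp
qed

lemma ideal_S_mono: "G \<subseteq> G' \<Longrightarrow> ideal_S m G \<subseteq> ideal_S m G'"
  unfolding ideal_S_def by blast

lemma ideal_S_least:
  assumes "G \<subseteq> ideal_S m G'"
  shows "ideal_S m G \<subseteq> ideal_S m G'"
proof
  fix p
  assume "p \<in> ideal_S m G"
  then show "p \<in> ideal_S m G'"
    by (induction rule: ideal_S_induct) (use assms in \<open>auto intro: ideal_S_zero ideal_S_add ideal_S_mult_left\<close>)
qed

lemma ideal_S_subset_S_ring:
  assumes "G \<subseteq> S_ring m"
  shows "ideal_S m G \<subseteq> S_ring m"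
proof
  fix p
  assume "p \<in> ideal_S m G"
  then show "p \<in> S_ring m"
    by (induction rule: ideal_S_induct) (use assms in \<open>auto intro: S_ring_zero S_ring_add S_ring_mult\<close>)
qed

lemma monom_in_monomial_ideal_S:
  assumes "(monom \<alpha> :: ('k::field) mpoly) \<in> ideal_S m (monom ` M)"
  shows "\<exists>\<mu>\<in>M. \<exists>t. \<alpha> = t + \<mu>"
proof -
  have "Poly_Mapping.lookup (monom \<alpha> :: 'k mpoly) \<alpha> \<noteq> 0"
    unfolding monom_def by simp
  moreover have "Poly_Mapping.lookup p \<alpha> = 0" if "p \<in> ideal_S m (monom ` M)" "\<not> (\<exists>\<mu>\<in>M. \<exists>t. \<alpha> = t + \<mu>)"
    for p :: "'k mpoly"
    using that
  proof (induction rule: ideal_S_induct)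
    case (mult q g)
    then obtain \<mu> where "\<mu> \<in> M" "g = monom \<mu>"
      by blast
    then have "\<alpha> \<notin> Poly_Mapping.keys (q * g)"
      using keys_mult[of q g] mult.prems unfolding monom_def by auto
    then show ?case
      by (simp add: in_keys_iff)
  qed (simp_all add: lookup_add)
  ultimately show ?thesis
    using assms by blast
qed

section \<open>Rewriting monomials by binomials\<close>

definition joinable :: "('a \<Rightarrow> 'a \<Rightarrow> bool) \<Rightarrow> 'a \<Rightarrow> 'a \<Rightarrow> bool" where
  "joinable r x y \<longleftrightarrow> (\<exists>u. r\<^sup>*\<^sup>* x u \<and> r\<^sup>*\<^sup>* y u)"

lemma joinable_sym: "joinable r x y \<Longrightarrow> joinable r y x"
  unfolding joinable_def by blast

lemma r_into_joinable: "r x y \<Longrightarrow> joinable r x y"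
  unfolding joinable_def by blast

lemma normal_form_exists:
  fixes f :: "'a \<Rightarrow> nat"
  assumes "\<And>x y. r x y \<Longrightarrow> f y < f x"
  shows "\<exists>y. r\<^sup>*\<^sup>* x y \<and> (\<forall>z. \<not> r y z)"
proof (induction x rule: measure_induct_rule[of f])
  case (less x)
  show ?case
  proof (cases "\<exists>z. r x z")
    case True
    then obtain z where "r x z"
      by blast
    with less assms obtain y where "r\<^sup>*\<^sup>* z y" "\<forall>w. \<not> r y w"
      by blast
    then show ?thesis
      using \<open>r x z\<close> by (meson converse_rtranclp_into_rtranclp)
  qed blast
qed

lemma newman_unique_normal_forms:
  fixes f :: "'a \<Rightarrow> nat"
  assumes terminating: "\<And>x y. r x y \<Longrightarrow> f y < f x"
    and locally_confluent: "\<And>x y z. r x y \<Longrightarrow> r x z \<Longrightarrow> joinable r y z"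
  shows "r\<^sup>*\<^sup>* x y \<Longrightarrow> r\<^sup>*\<^sup>* x z \<Longrightarrow> \<forall>w. \<not> r y w \<Longrightarrow> \<forall>w. \<not> r z w \<Longrightarrow> y = z"
proof (induction x arbitrary: y z rule: measure_induct_rule[of f])
  case (less x)
  show ?case
  proof (cases "\<exists>w. r x w")
    case False
    then show ?thesis
      using less.prems by (metis converse_rtranclpE)
  next
    case True
    then obtain x1 x2 where x1: "r x x1" "r\<^sup>*\<^sup>* x1 y" and x2: "r x x2" "r\<^sup>*\<^sup>* x2 z"
      using less.prems by (metis converse_rtranclpE)
    obtain u where u: "r\<^sup>*\<^sup>* x1 u" "r\<^sup>*\<^sup>* x2 u"
      using locally_confluent[OF x1(1) x2(1)] unfolding joinable_def by blast
    obtain u' where u': "r\<^sup>*\<^sup>* u u'" "\<forall>w. \<not> r u' w"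
      using normal_form_exists[of r f u] terminating by blast
    have "y = u'"
      using less.IH[of x1 y u'] terminating[OF x1(1)] x1(2) u(1) u' less.prems(3)
      by (meson rtranclp_trans)
    moreover have "z = u'"
      using less.IH[of x2 z u'] terminating[OF x2(1)] x2(2) u(2) u' less.prems(4)
      by (meson rtranclp_trans)
    ultimately show ?thesis
      by simp
  qed
qed

lemma reaches_normal_form_step_iff:
  fixes f :: "'a \<Rightarrow> nat"
  assumes terminating: "\<And>x y. r x y \<Longrightarrow> f y < f x"
    and locally_confluent: "\<And>x y z. r x y \<Longrightarrow> r x z \<Longrightarrow> joinable r y z"
    and "\<forall>w. \<not> r \<alpha> w" "r x y"
  shows "r\<^sup>*\<^sup>* x \<alpha> \<longleftrightarrow> r\<^sup>*\<^sup>* y \<alpha>"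
proof
  assume "r\<^sup>*\<^sup>* x \<alpha>"
  obtain z where z: "r\<^sup>*\<^sup>* y z" "\<forall>w. \<not> r z w"
    using terminating normal_form_exists by metis
  have "r\<^sup>*\<^sup>* x z"
    using assms(4) z(1) by (rule converse_rtranclp_into_rtranclp)
  have "z = \<alpha>"
    using terminating locally_confluent \<open>r\<^sup>*\<^sup>* x z\<close> \<open>r\<^sup>*\<^sup>* x \<alpha>\<close> z(2) assms(3)
    by (rule newman_unique_normal_forms)
  then show "r\<^sup>*\<^sup>* y \<alpha>"
    using z(1) by simp
next
  assume "r\<^sup>*\<^sup>* y \<alpha>"
  with assms(4) show "r\<^sup>*\<^sup>* x \<alpha>"
    by (rule converse_rtranclp_into_rtranclp)
qed

definition oriented_pairs :: "nat \<Rightarrow> (mono \<times> mono) set \<Rightarrow> bool" where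
  "oriented_pairs m P \<longleftrightarrow> (\<forall>(\<mu>, \<nu>)\<in>P. S_mono m \<mu> \<and> S_mono m \<nu> \<and> lex_less m \<nu> \<mu>)"

lemma oriented_pairsD:
  assumes "oriented_pairs m P" "(\<mu>, \<nu>) \<in> P"
  shows "S_mono m \<mu>" "S_mono m \<nu>" "lex_less m \<nu> \<mu>"
  using assms unfolding oriented_pairs_def by auto

definition mono_step :: "nat \<Rightarrow> (mono \<times> mono) set \<Rightarrow> mono \<Rightarrow> mono \<Rightarrow> bool" where
  "mono_step m P x y \<longleftrightarrow> (\<exists>\<mu> \<nu> t. (\<mu>, \<nu>) \<in> P \<and> S_mono m t \<and> x = t + \<mu> \<and> y = t + \<nu>)"

lemma mono_stepI: "(\<mu>, \<nu>) \<in> P \<Longrightarrow> S_mono m t \<Longrightarrow> mono_step m P (t + \<mu>) (t + \<nu>)"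
  unfolding mono_step_def by blast

lemma mono_step_add_left:
  assumes "mono_step m P x y" "S_mono m s"
  shows "mono_step m P (s + x) (s + y)"
proof -
  obtain \<mu> \<nu> t where "(\<mu>, \<nu>) \<in> P" "S_mono m t" "x = t + \<mu>" "y = t + \<nu>"
    using assms(1) unfolding mono_step_def by blast
  then show ?thesis
    using mono_stepI[of \<mu> \<nu> P m "s + t"] S_mono_add[OF assms(2)] by (simp add: add.assoc)
qed

lemma rtranclp_mono_step_add_left:
  assumes "(mono_step m P)\<^sup>*\<^sup>* x y" "S_mono m s"
  shows "(mono_step m P)\<^sup>*\<^sup>* (s + x) (s + y)"
  using assms(1)
  by induction (auto intro: rtranclp.rtrancl_into_rtrancl mono_step_add_left[OF _ assms(2)])

lemma tranclp_mono_step_lex_less: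
  assumes "oriented_pairs m P" "(mono_step m P)\<^sup>+\<^sup>+ x y"
  shows "lex_less m y x"
proof -
  have step: "lex_less m y x" if "mono_step m P x y" for x y
    using that lex_less_add_left oriented_pairsD(3)[OF assms(1)] unfolding mono_step_def by blast
  show ?thesis
    using assms(2) by induction (use step lex_less_trans in blast)+
qed

(* With truncated subtraction of exponents, mu1 + (mu2 - mu1) is the componentwise maximum. *)
definition mono_lcm :: "mono \<Rightarrow> mono \<Rightarrow> mono" where
  "mono_lcm \<mu>1 \<mu>2 = \<mu>1 + (\<mu>2 - \<mu>1)"

lemma mono_lcm_commute: "mono_lcm \<mu>1 \<mu>2 = mono_lcm \<mu>2 \<mu>1"
  unfolding mono_lcm_def by (rule poly_mapping_eqI) (simp add: lookup_add lookup_minus)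

lemma mono_lcm_minus_add: "mono_lcm \<mu>1 \<mu>2 - \<mu>1 + \<mu>1 = mono_lcm \<mu>1 \<mu>2" "mono_lcm \<mu>1 \<mu>2 - \<mu>2 + \<mu>2 = mono_lcm \<mu>1 \<mu>2"
  unfolding mono_lcm_def by (rule poly_mapping_eqI, simp add: lookup_add lookup_minus)+

lemma critical_pairs_local_confluence:
  assumes oriented: "oriented_pairs m P"
    and critical_pairs: "\<And>\<mu>1 \<nu>1 \<mu>2 \<nu>2. (\<mu>1, \<nu>1) \<in> P \<Longrightarrow> (\<mu>2, \<nu>2) \<in> P \<Longrightarrow>
        joinable (mono_step m P) (mono_lcm \<mu>1 \<mu>2 - \<mu>1 + \<nu>1) (mono_lcm \<mu>1 \<mu>2 - \<mu>2 + \<nu>2)"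
    and steps: "mono_step m P x y1" "mono_step m P x y2"
  shows "joinable (mono_step m P) y1 y2"
proof -
  obtain \<mu>1 \<nu>1 t1 where h1: "(\<mu>1, \<nu>1) \<in> P" "S_mono m t1" "x = t1 + \<mu>1" "y1 = t1 + \<nu>1"
    using steps(1) unfolding mono_step_def by blast
  obtain \<mu>2 \<nu>2 t2 where h2: "(\<mu>2, \<nu>2) \<in> P" "x = t2 + \<mu>2" "y2 = t2 + \<nu>2"
    using steps(2) unfolding mono_step_def by blast
  define l where "l = mono_lcm \<mu>1 \<mu>2"
  define s where "s = x - l"
  have "S_mono m s"
    unfolding s_def h1(3) by (intro S_mono_diff S_mono_add h1(2) oriented_pairsD(1)[OF oriented h1(1)])
  have lookup_x: "Poly_Mapping.lookup x v = Poly_Mapping.lookup t1 v + Poly_Mapping.lookup \<mu>1 v"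
    "Poly_Mapping.lookup x v = Poly_Mapping.lookup t2 v + Poly_Mapping.lookup \<mu>2 v" for v
    by (simp add: h1(3) lookup_add, simp add: h2(2) lookup_add)
  have "y1 = s + (l - \<mu>1 + \<nu>1)"
  proof (rule poly_mapping_eqI)
    fix v
    show "Poly_Mapping.lookup y1 v = Poly_Mapping.lookup (s + (l - \<mu>1 + \<nu>1)) v"
      using lookup_x[of v] unfolding h1(4) s_def l_def mono_lcm_def lookup_add lookup_minus by arith
  qed
  moreover have "y2 = s + (l - \<mu>2 + \<nu>2)"
  proof (rule poly_mapping_eqI)
    fix v
    show "Poly_Mapping.lookup y2 v = Poly_Mapping.lookup (s + (l - \<mu>2 + \<nu>2)) v"
      using lookup_x[of v] unfolding h2(3) s_def l_def mono_lcm_def lookup_add lookup_minus by arith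
  qed
  moreover obtain u where "(mono_step m P)\<^sup>*\<^sup>* (l - \<mu>1 + \<nu>1) u" "(mono_step m P)\<^sup>*\<^sup>* (l - \<mu>2 + \<nu>2) u"
    using critical_pairs[OF h1(1) h2(1)] unfolding joinable_def l_def by blast
  ultimately show ?thesis
    unfolding joinable_def using rtranclp_mono_step_add_left \<open>S_mono m s\<close> by metis
qed

lemma coprime_critical_pair_joinable:
  assumes "(\<mu>1, \<nu>1) \<in> P" "(\<mu>2, \<nu>2) \<in> P" "oriented_pairs m P"
    and coprime: "\<And>v. Poly_Mapping.lookup \<mu>1 v = 0 \<or> Poly_Mapping.lookup \<mu>2 v = 0"
  shows "joinable (mono_step m P) (mono_lcm \<mu>1 \<mu>2 - \<mu>1 + \<nu>1) (mono_lcm \<mu>1 \<mu>2 - \<mu>2 + \<nu>2)"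
proof -
  have "mono_lcm \<mu>1 \<mu>2 - \<mu>1 + \<nu>1 = \<nu>1 + \<mu>2"
    unfolding mono_lcm_def
  proof (rule poly_mapping_eqI)
    fix v
    show "Poly_Mapping.lookup (\<mu>1 + (\<mu>2 - \<mu>1) - \<mu>1 + \<nu>1) v = Poly_Mapping.lookup (\<nu>1 + \<mu>2) v"
      using coprime[of v] by (auto simp: lookup_add lookup_minus)
  qed
  moreover have "mono_lcm \<mu>1 \<mu>2 - \<mu>2 + \<nu>2 = \<nu>2 + \<mu>1"
    unfolding mono_lcm_def
  proof (rule poly_mapping_eqI)
    fix v
    show "Poly_Mapping.lookup (\<mu>1 + (\<mu>2 - \<mu>1) - \<mu>2 + \<nu>2) v = Poly_Mapping.lookup (\<nu>2 + \<mu>1) v"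
      using coprime[of v] by (auto simp: lookup_add lookup_minus)
  qed
  moreover have "mono_step m P (\<nu>1 + \<mu>2) (\<nu>1 + \<nu>2)" "mono_step m P (\<nu>2 + \<mu>1) (\<nu>1 + \<nu>2)"
    using mono_stepI[OF assms(2) oriented_pairsD(2)[OF assms(3,1)]]
      mono_stepI[OF assms(1) oriented_pairsD(2)[OF assms(3,2)]]
    by (simp_all add: add.commute)
  ultimately show ?thesis
    unfolding joinable_def by (metis r_into_rtranclp)
qed

section \<open>A Groebner basis criterion for binomials\<close>

definition lin_functional :: "(mono \<Rightarrow> 'k::field) \<Rightarrow> 'k mpoly \<Rightarrow> 'k" where
  "lin_functional \<chi> p = (\<Sum>\<beta>\<in>Poly_Mapping.keys p. Poly_Mapping.lookup p \<beta> * \<chi> \<beta>)"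

lemma lin_functional_add: "lin_functional \<chi> (p + q) = lin_functional \<chi> p + lin_functional \<chi> q"
  unfolding lin_functional_def by (rule setsum_keys_plus_distrib) (simp_all add: distrib_right)

lemma lin_functional_diff: "lin_functional \<chi> (p - q) = lin_functional \<chi> p - lin_functional \<chi> q"
  using lin_functional_add[of \<chi> p "- q"] by (simp add: lin_functional_def sum_negf)

lemma lin_functional_single: "lin_functional \<chi> (Poly_Mapping.single \<beta> c) = c * \<chi> \<beta>"
  unfolding lin_functional_def by (cases "c = 0") auto

lemma lin_functional_sum: "lin_functional \<chi> (\<Sum>i\<in>I. f i) = (\<Sum>i\<in>I. lin_functional \<chi> (f i))"
  by (induction I rule: infinite_finite_induct) (simp_all add: lin_functional_add lin_functional_def[of \<chi> 0])

lemma sum_single_lookup: "(\<Sum>t\<in>Poly_Mapping.keys p. Poly_Mapping.single t (Poly_Mapping.lookup p t)) = p"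
  by (rule poly_mapping_eqI) (simp add: lookup_sum lookup_single when_def in_keys_iff)

lemma lin_functional_mult_binom:
  "lin_functional \<chi> (q * binom \<mu> \<nu>) =
     (\<Sum>t\<in>Poly_Mapping.keys q. Poly_Mapping.lookup q t * (\<chi> (t + \<mu>) - \<chi> (t + \<nu>)))"
proof -
  have "q * binom \<mu> \<nu> = (\<Sum>t\<in>Poly_Mapping.keys q.
      Poly_Mapping.single (t + \<mu>) (Poly_Mapping.lookup q t) - Poly_Mapping.single (t + \<nu>) (Poly_Mapping.lookup q t))"
    by (subst (1) sum_single_lookup[symmetric])
       (simp add: sum_distrib_right binom_def monom_def right_diff_distrib mult_single sum_subtractf)
  then show ?thesis
    by (simp add: lin_functional_sum lin_functional_diff lin_functional_single right_diff_distrib)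
qed

lemma lin_functional_vanishes_on_binomial_ideal:
  assumes "p \<in> ideal_S m (binomials P)"
    and invariant: "\<And>\<mu> \<nu> t. (\<mu>, \<nu>) \<in> P \<Longrightarrow> S_mono m t \<Longrightarrow> \<chi> (t + \<mu>) = \<chi> (t + \<nu>)"
  shows "lin_functional \<chi> p = 0"
  using assms(1)
proof (induction rule: ideal_S_induct)
  case (mult q g)
  then obtain \<mu> \<nu> where "(\<mu>, \<nu>) \<in> P" "g = binom \<mu> \<nu>"
    unfolding binomials_def by auto
  then show ?case
    using mult.hyps(1) invariant unfolding S_ring_iff by (simp add: lin_functional_mult_binom sum.neutral)
qed (simp_all add: lin_functional_add lin_functional_def[of \<chi> 0])

lemma binomials_subset_S_ring: "oriented_pairs m P \<Longrightarrow> binomials P \<subseteq> S_ring m"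
  unfolding binomials_def using binom_in_S_ring oriented_pairsD(1,2) by fastforce

lemma lead_monos_binomials:
  assumes "oriented_pairs m P"
  shows "{monom (lead_mono m f) | f. f \<in> binomials P \<and> f \<noteq> (0 :: 'k::field mpoly)} = monom ` fst ` P"
proof -
  have "binom \<mu> \<nu> \<noteq> (0 :: 'k mpoly) \<and> lead_mono m (binom \<mu> \<nu> :: 'k mpoly) = \<mu>" if "(\<mu>, \<nu>) \<in> P" for \<mu> \<nu>
    using oriented_pairsD[OF assms that] lex_less_irrefl binom_nonzero lead_mono_binom by metis
  then show ?thesis
    unfolding binomials_def by force
qed

lemma lead_mono_reducible:
  fixes p :: "'k::field mpoly" and h :: "mono \<Rightarrow> nat"
  assumes P: "oriented_pairs m P"
    and terminating: "\<And>x y. mono_step m P x y \<Longrightarrow> h y < h x"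
    and locally_confluent: "\<And>x y z. mono_step m P x y \<Longrightarrow> mono_step m P x z \<Longrightarrow> joinable (mono_step m P) y z"
    and p: "p \<in> ideal_S m (binomials P)" "p \<noteq> 0"
  shows "\<exists>y. mono_step m P (lead_mono m p) y"
proof (rule ccontr)
  let ?r = "mono_step m P"
  define \<alpha> where "\<alpha> = lead_mono m p"
  assume "\<nexists>y. ?r (lead_mono m p) y"
  then have irreducible: "\<forall>w. \<not> ?r \<alpha> w"
    unfolding \<alpha>_def by blast
  have p_in_S: "p \<in> S_ring m"
    using ideal_S_subset_S_ring[OF binomials_subset_S_ring[OF P]] p(1) by blast
  \<comment> \<open>By confluence \<chi> is invariant under rewriting, so it annihilates the ideal; but among the
      monomials of p it only sees \<alpha>, since everything rewriting to \<alpha> is lex-larger.\<close>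
  define \<chi> where "\<chi> \<beta> = (if ?r\<^sup>*\<^sup>* \<beta> \<alpha> then 1 else (0 :: 'k))" for \<beta>
  have "lin_functional \<chi> p = 0"
  proof (rule lin_functional_vanishes_on_binomial_ideal[OF p(1)])
    fix \<mu> \<nu> t
    assume "(\<mu>, \<nu>) \<in> P" "S_mono m t"
    then have "?r (t + \<mu>) (t + \<nu>)"
      by (rule mono_stepI)
    with terminating locally_confluent irreducible have "?r\<^sup>*\<^sup>* (t + \<mu>) \<alpha> \<longleftrightarrow> ?r\<^sup>*\<^sup>* (t + \<nu>) \<alpha>"
      by (rule reaches_normal_form_step_iff)
    then show "\<chi> (t + \<mu>) = \<chi> (t + \<nu>)"
      unfolding \<chi>_def by simp
  qed
  moreover have "\<chi> \<beta> = 0" if "\<beta> \<in> Poly_Mapping.keys p - {\<alpha>}" for \<beta>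
  proof -
    have "lex_less m \<beta> \<alpha>"
      using lex_less_lead_mono[OF p_in_S p(2)] that unfolding \<alpha>_def by blast
    then have "\<not> ?r\<^sup>+\<^sup>+ \<beta> \<alpha>"
      using tranclp_mono_step_lex_less[OF P] lex_less_asym by blast
    moreover have "\<beta> \<noteq> \<alpha>"
      using that by blast
    ultimately show ?thesis
      unfolding \<chi>_def by (auto dest: rtranclpD)
  qed
  then have "lin_functional \<chi> p = Poly_Mapping.lookup p \<alpha> * \<chi> \<alpha>"
    using lead_mono_in_keys[OF p_in_S p(2)] unfolding lin_functional_def \<alpha>_def
    by (simp add: sum.remove)
  moreover have "Poly_Mapping.lookup p \<alpha> \<noteq> 0"
    using lead_mono_in_keys[OF p_in_S p(2)] unfolding \<alpha>_def by (simp add: in_keys_iff)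
  ultimately show False
    unfolding \<chi>_def by simp
qed

lemma binomials_groebner_basis:
  fixes h :: "mono \<Rightarrow> nat"
  assumes P: "oriented_pairs m P"
    and terminating: "\<And>x y. mono_step m P x y \<Longrightarrow> h y < h x"
    and locally_confluent: "\<And>x y z. mono_step m P x y \<Longrightarrow> mono_step m P x z \<Longrightarrow> joinable (mono_step m P) y z"
  shows "is_groebner_basis m (binomials P) (ideal_S m (binomials P) :: 'k::field mpoly set)"
proof -
  let ?G = "binomials P :: 'k mpoly set"
  have "init_ideal m (ideal_S m ?G) \<subseteq> init_ideal m ?G"
    unfolding init_ideal_def lead_monos_binomials[OF P]
  proof (rule ideal_S_least, rule subsetI)
    fix x :: "'k mpoly"
    assume "x \<in> {monom (lead_mono m f) | f. f \<in> ideal_S m ?G \<and> f \<noteq> 0}"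
    then obtain f where f: "f \<in> ideal_S m ?G" "f \<noteq> 0" "x = monom (lead_mono m f)"
      by blast
    have "\<exists>y. mono_step m P (lead_mono m f) y"
      using P terminating locally_confluent f(1,2) by (rule lead_mono_reducible)
    then obtain \<mu> \<nu> t where "(\<mu>, \<nu>) \<in> P" "S_mono m t" "lead_mono m f = t + \<mu>"
      unfolding mono_step_def by blast
    moreover have "x = monom t * monom \<mu>"
      unfolding f(3) \<open>lead_mono m f = t + \<mu>\<close> monom_def by (simp add: mult_single)
    moreover have "monom \<mu> \<in> ideal_S m (monom ` fst ` P)"
      using \<open>(\<mu>, \<nu>) \<in> P\<close> by (intro generator_in_ideal_S) force
    ultimately show "x \<in> ideal_S m (monom ` fst ` P)"
      using ideal_S_mult_left monom_in_S_ring by metis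
  qed
  moreover have "init_ideal m ?G \<subseteq> init_ideal m (ideal_S m ?G)"
    unfolding init_ideal_def by (rule ideal_S_mono) (auto intro: generator_in_ideal_S)
  ultimately show ?thesis
    unfolding is_groebner_basis_def using generator_in_ideal_S by blast
qed

lemma reducible_if_binom_in_groebner_ideal:
  fixes H :: "'k::field mpoly set"
  assumes P: "oriented_pairs m P"
    and gb: "is_groebner_basis m (binomials P) H"
    and "binom y z \<in> H" "S_mono m y" "S_mono m z" "lex_less m z y"
  shows "\<exists>w. mono_step m P y w"
proof -
  have "binom y z \<noteq> (0 :: 'k mpoly)"
    using assms(6) lex_less_irrefl binom_nonzero by metis
  moreover have "lead_mono m (binom y z :: 'k mpoly) = y"
    using assms(4-6) by (rule lead_mono_binom)
  ultimately have "monom y \<in> init_ideal m H"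
    unfolding init_ideal_def using assms(3) by (intro generator_in_ideal_S) force
  then have "(monom y :: 'k mpoly) \<in> ideal_S m (monom ` fst ` P)"
    using gb unfolding is_groebner_basis_def init_ideal_def lead_monos_binomials[OF P] by simp
  then obtain \<mu> \<nu> t where "(\<mu>, \<nu>) \<in> P" "y = t + \<mu>"
    using monom_in_monomial_ideal_S by force
  then show ?thesis
    using mono_stepI S_mono_addD assms(4) by blast
qed

section \<open>The generators of L as oriented pairs of monomials\<close>

lemma lookup_Tmono:
  "Poly_Mapping.lookup (Tmono m e) v = (case v of T i \<Rightarrow> if 1 \<le> i \<and> i \<le> m then e i else 0 | _ \<Rightarrow> 0)"
  unfolding Tmono_def lookup_sum lookup_single by (cases v) (auto simp: when_def)

lemma lookup_Xmono:
  "Poly_Mapping.lookup (Xmono m c) v = (case v of X i \<Rightarrow> if 1 \<le> i \<and> i \<le> m then c i else 0 | _ \<Rightarrow> 0)"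
  unfolding Xmono_def lookup_sum lookup_single by (cases v) (auto simp: when_def)

lemma lookup_Wpow: "Poly_Mapping.lookup (Wpow m k) v = (if v = X (Suc m) then k else 0)"
  unfolding Wpow_def Wvar_def lookup_single by (auto simp: when_def)

abbreviation Xmon :: "nat \<Rightarrow> mono" where
  "Xmon i \<equiv> Poly_Mapping.single (X i) 1"

lemma psi_exp_single_X:
  "psi_exp m a b (Poly_Mapping.single (X i) n) t = (if i = t then n * a t else 0) + (if i = Suc m then n * b t else 0)"
  unfolding psi_exp_def Wvar_def by (simp add: lookup_single when_def)

lemma psi_exp_Wpow: "psi_exp m a b (Wpow m k) t = (if t = Suc m then k * a t else 0) + k * b t"
  unfolding psi_exp_def Wvar_def by (simp add: lookup_Wpow)

lemma psi_exp_Xmono: "psi_exp m a b (Xmono m c) t = (if 1 \<le> t \<and> t \<le> m then c t * a t else 0)"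
  unfolding psi_exp_def Wvar_def by (simp add: lookup_Xmono)

definition Pcal_lhs :: "nat \<Rightarrow> (nat \<Rightarrow> nat) \<Rightarrow> (nat \<Rightarrow> nat) \<Rightarrow> mono \<Rightarrow> mono \<Rightarrow> mono" where
  "Pcal_lhs m a b M N = Tmono m (\<lambda>i. psi_exp m a b N i - min (psi_exp m a b M i) (psi_exp m a b N i)) + M"

definition Pcal_rhs :: "nat \<Rightarrow> (nat \<Rightarrow> nat) \<Rightarrow> (nat \<Rightarrow> nat) \<Rightarrow> mono \<Rightarrow> mono \<Rightarrow> mono" where
  "Pcal_rhs m a b M N = Tmono m (\<lambda>i. psi_exp m a b M i - min (psi_exp m a b M i) (psi_exp m a b N i)) + N"

lemma Pcal_eq_binom: "Pcal m a b M N = binom (Pcal_lhs m a b M N) (Pcal_rhs m a b M N)"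
  by (simp add: Pcal_def Pcal_lhs_def Pcal_rhs_def binom_def Let_def)

lemma lookup_X_Pcal_lhs: "Poly_Mapping.lookup (Pcal_lhs m a b M N) (X s) = Poly_Mapping.lookup M (X s)"
  by (simp add: Pcal_lhs_def lookup_add lookup_Tmono)

lemma lookup_X_Pcal_rhs: "Poly_Mapping.lookup (Pcal_rhs m a b M N) (X s) = Poly_Mapping.lookup N (X s)"
  by (simp add: Pcal_rhs_def lookup_add lookup_Tmono)

definition Pc_lhs :: "nat \<Rightarrow> (nat \<Rightarrow> nat) \<Rightarrow> (nat \<Rightarrow> nat) \<Rightarrow> (nat \<Rightarrow> nat) \<Rightarrow> mono" where
  "Pc_lhs m a b c = Pcal_lhs m a b (Wpow m (vabs m c)) (Xmono m c)"

definition Pc_rhs :: "nat \<Rightarrow> (nat \<Rightarrow> nat) \<Rightarrow> (nat \<Rightarrow> nat) \<Rightarrow> (nat \<Rightarrow> nat) \<Rightarrow> mono" where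
  "Pc_rhs m a b c = Pcal_rhs m a b (Wpow m (vabs m c)) (Xmono m c)"

lemma lookup_Pc_lhs:
  "Poly_Mapping.lookup (Pc_lhs m a b c) v =
    (case v of T t \<Rightarrow> if 1 \<le> t \<and> t \<le> m then c t * a t - vabs m c * b t else 0
             | X s \<Rightarrow> if s = Suc m then vabs m c else 0 | Zv \<Rightarrow> 0)"
  unfolding Pc_lhs_def Pcal_lhs_def lookup_add lookup_Tmono lookup_Wpow psi_exp_Wpow psi_exp_Xmono
  by (cases v) auto

lemma lookup_Pc_rhs:
  "Poly_Mapping.lookup (Pc_rhs m a b c) v =
    (case v of T t \<Rightarrow> if 1 \<le> t \<and> t \<le> m then vabs m c * b t - c t * a t else 0
             | X s \<Rightarrow> if 1 \<le> s \<and> s \<le> m then c s else 0 | Zv \<Rightarrow> 0)"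
  unfolding Pc_rhs_def Pcal_rhs_def lookup_add lookup_Tmono lookup_Xmono psi_exp_Wpow psi_exp_Xmono
  by (cases v) auto

lemma Pcal_lhs_Xmon:
  assumes "1 \<le> j" "j < i" "i \<le> m"
  shows "Pcal_lhs m a b (Xmon i) (Xmon j) = Poly_Mapping.single (T j) (a j) + Xmon i"
  by (rule poly_mapping_eqI) (use assms in \<open>auto simp: Pcal_lhs_def lookup_add lookup_Tmono
      psi_exp_single_X lookup_single when_def split: var.split\<close>)

lemma Pcal_rhs_Xmon:
  assumes "1 \<le> j" "j < i" "i \<le> m"
  shows "Pcal_rhs m a b (Xmon i) (Xmon j) = Poly_Mapping.single (T i) (a i) + Xmon j"
  by (rule poly_mapping_eqI) (use assms in \<open>auto simp: Pcal_rhs_def lookup_add lookup_Tmono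
      psi_exp_single_X lookup_single when_def split: var.split\<close>)

definition gen_pairs :: "nat \<Rightarrow> (nat \<Rightarrow> nat) \<Rightarrow> (nat \<Rightarrow> nat) \<Rightarrow> (nat \<Rightarrow> nat) set \<Rightarrow> (mono \<times> mono) set" where
  "gen_pairs m a b D =
     {(Pcal_lhs m a b (Xmon i) (Xmon j), Pcal_rhs m a b (Xmon i) (Xmon j)) | i j. 1 \<le> j \<and> j < i \<and> i \<le> Suc m}
     \<union> {(Pc_lhs m a b c, Pc_rhs m a b c) | c. c \<in> D}"

lemma gen_pairs_mono: "D \<subseteq> D' \<Longrightarrow> gen_pairs m a b D \<subseteq> gen_pairs m a b D'"
  unfolding gen_pairs_def by blast

lemma binomials_gen_pairs:
  "binomials (gen_pairs m a b D) = (Gamma0 m a b \<union> {Pc m a b c | c. c \<in> D} :: 'k::field mpoly set)"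
  unfolding binomials_def gen_pairs_def Gamma0_def Pc_def Pc_lhs_def Pc_rhs_def vabs_def Pcal_eq_binom
  by (auto simp: image_iff)

lemma S_mono_Tmono: "S_mono m (Tmono m e)"
  unfolding S_mono_def vars_S_def by (auto simp: in_keys_iff lookup_Tmono split: var.splits if_splits)

lemma S_mono_single_X: "1 \<le> i \<Longrightarrow> i \<le> Suc m \<Longrightarrow> S_mono m (Poly_Mapping.single (X i) n)"
  unfolding S_mono_def vars_S_def by auto

lemma S_mono_single_T: "1 \<le> i \<Longrightarrow> i \<le> m \<Longrightarrow> S_mono m (Poly_Mapping.single (T i) n)"
  unfolding S_mono_def vars_S_def by auto

lemma S_mono_Xmono: "S_mono m (Xmono m c)"
  unfolding S_mono_def vars_S_def by (auto simp: in_keys_iff lookup_Xmono split: var.splits if_splits)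

lemma S_mono_Wpow: "S_mono m (Wpow m k)"
  unfolding S_mono_def vars_S_def by (auto simp: in_keys_iff lookup_Wpow split: if_splits)

(* The termination measure: every generator strictly lowers it, W = X (m+1) having the largest weight. *)
definition X_weight :: "nat \<Rightarrow> mono \<Rightarrow> nat" where
  "X_weight m \<alpha> = (\<Sum>s\<in>{1..Suc m}. s * Poly_Mapping.lookup \<alpha> (X s))"

definition W_deg :: "nat \<Rightarrow> mono \<Rightarrow> nat" where
  "W_deg m \<alpha> = Poly_Mapping.lookup \<alpha> (X (Suc m))"

lemma X_weight_add: "X_weight m (\<alpha> + \<beta>) = X_weight m \<alpha> + X_weight m \<beta>"
  unfolding X_weight_def lookup_add by (simp add: algebra_simps sum.distrib)

lemma X_weight_Tmono: "X_weight m (Tmono m e) = 0"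
  unfolding X_weight_def lookup_Tmono by simp

lemma X_weight_single_X:
  assumes "1 \<le> i" "i \<le> Suc m"
  shows "X_weight m (Poly_Mapping.single (X i) n) = i * n"
proof -
  have eq: "(\<lambda>s. s * Poly_Mapping.lookup (Poly_Mapping.single (X i) n) (X s)) = (\<lambda>s. if s = i then i * n else 0)"
    by (auto simp: lookup_single when_def)
  show ?thesis
    unfolding X_weight_def eq using assms by simp
qed

lemma X_weight_Wpow: "X_weight m (Wpow m k) = Suc m * k"
  unfolding X_weight_def lookup_Wpow by simp

lemma X_weight_Xmono: "X_weight m (Xmono m c) \<le> m * vabs m c"
proof -
  have "X_weight m (Xmono m c) = (\<Sum>s\<in>{1..m}. s * c s)"
    unfolding X_weight_def lookup_Xmono by simp
  also have "\<dots> \<le> (\<Sum>s\<in>{1..m}. m * c s)"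
    by (intro sum_mono) auto
  finally show ?thesis
    by (simp add: vabs_def sum_distrib_left)
qed

lemma W_deg_add: "W_deg m (\<alpha> + \<beta>) = W_deg m \<alpha> + W_deg m \<beta>"
  unfolding W_deg_def by (simp add: lookup_add)

lemma W_deg_Pc_lhs: "W_deg m (Pc_lhs m a b c) = vabs m c"
  unfolding W_deg_def by (simp add: lookup_Pc_lhs)

lemma Gamma0_pair_props:
  fixes a b :: "nat \<Rightarrow> nat"
  assumes ij: "1 \<le> j" "j < i" "i \<le> Suc m"
  defines "\<mu> \<equiv> Pcal_lhs m a b (Xmon i) (Xmon j)" and "\<nu> \<equiv> Pcal_rhs m a b (Xmon i) (Xmon j)"
  shows "S_mono m \<mu> \<and> S_mono m \<nu> \<and> lex_less m \<nu> \<mu> \<and> X_weight m \<nu> < X_weight m \<mu> \<and> W_deg m \<nu> = 0"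
proof -
  have "lex_less m \<nu> \<mu>"
    unfolding lex_less_def
  proof (intro bexI[of _ "X i"] conjI ballI impI)
    fix w
    assume "w \<in> vars_S m" "var_rank m (X i) < var_rank m w"
    then obtain i' where "w = X i'" "i < i'"
      unfolding vars_S_def var_rank_def by auto
    then show "Poly_Mapping.lookup \<nu> w = Poly_Mapping.lookup \<mu> w"
      using ij by (simp add: \<mu>_def \<nu>_def lookup_X_Pcal_lhs lookup_X_Pcal_rhs lookup_single)
  qed (use ij in \<open>auto simp: \<mu>_def \<nu>_def lookup_X_Pcal_lhs lookup_X_Pcal_rhs vars_S_def lookup_single when_def\<close>)
  moreover have "X_weight m \<nu> = j" "X_weight m \<mu> = i"
    using ij by (simp_all add: \<mu>_def \<nu>_def Pcal_lhs_def Pcal_rhs_def X_weight_add X_weight_Tmono X_weight_single_X)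
  ultimately show ?thesis
    using ij by (auto simp: \<mu>_def \<nu>_def Pcal_lhs_def Pcal_rhs_def W_deg_def lookup_add lookup_Tmono lookup_single
        intro!: S_mono_add S_mono_Tmono S_mono_single_X)
qed

lemma Pc_pair_props:
  fixes a b :: "nat \<Rightarrow> nat"
  assumes "vabs m c \<noteq> 0"
  defines "\<mu> \<equiv> Pc_lhs m a b c" and "\<nu> \<equiv> Pc_rhs m a b c"
  shows "S_mono m \<mu> \<and> S_mono m \<nu> \<and> lex_less m \<nu> \<mu> \<and> X_weight m \<nu> < X_weight m \<mu> \<and> W_deg m \<nu> = 0"
proof -
  have "lex_less m \<nu> \<mu>"
    unfolding lex_less_def
  proof (intro bexI[of _ "X (Suc m)"] conjI ballI impI)
    fix w
    assume "w \<in> vars_S m" "var_rank m (X (Suc m)) < var_rank m w"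
    then show "Poly_Mapping.lookup \<nu> w = Poly_Mapping.lookup \<mu> w"
      unfolding vars_S_def var_rank_def by auto
  qed (use assms in \<open>auto simp: lookup_Pc_lhs lookup_Pc_rhs vars_S_def\<close>)
  moreover have "X_weight m \<nu> \<le> m * vabs m c" "X_weight m \<mu> = Suc m * vabs m c"
    using X_weight_Xmono[of m c]
    by (simp_all add: \<mu>_def \<nu>_def Pc_lhs_def Pc_rhs_def Pcal_lhs_def Pcal_rhs_def X_weight_add X_weight_Tmono
        X_weight_Wpow)
  ultimately show ?thesis
    using assms(1)
    by (auto simp: \<mu>_def \<nu>_def Pc_lhs_def Pc_rhs_def Pcal_lhs_def Pcal_rhs_def W_deg_def lookup_add lookup_Tmono
        lookup_Xmono intro!: S_mono_add S_mono_Tmono S_mono_Xmono S_mono_Wpow)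
qed

lemma gen_pair_props:
  assumes "(\<mu>, \<nu>) \<in> gen_pairs m a b D" "\<forall>c\<in>D. vabs m c \<noteq> 0"
  shows "S_mono m \<mu>" "S_mono m \<nu>" "lex_less m \<nu> \<mu>" "X_weight m \<nu> < X_weight m \<mu>" "W_deg m \<nu> = 0"
proof -
  have "S_mono m \<mu> \<and> S_mono m \<nu> \<and> lex_less m \<nu> \<mu> \<and> X_weight m \<nu> < X_weight m \<mu> \<and> W_deg m \<nu> = 0"
    using assms(1) unfolding gen_pairs_def
  proof (elim UnE CollectE exE conjE)
    fix i j
    assume "1 \<le> j" "j < i" "i \<le> Suc m"
      and "(\<mu>, \<nu>) = (Pcal_lhs m a b (Xmon i) (Xmon j), Pcal_rhs m a b (Xmon i) (Xmon j))"
    then show ?thesis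
      using Gamma0_pair_props by simp
  next
    fix c
    assume "c \<in> D" and "(\<mu>, \<nu>) = (Pc_lhs m a b c, Pc_rhs m a b c)"
    then show ?thesis
      using Pc_pair_props assms(2) by simp
  qed
  then show "S_mono m \<mu>" "S_mono m \<nu>" "lex_less m \<nu> \<mu>" "X_weight m \<nu> < X_weight m \<mu>" "W_deg m \<nu> = 0"
    by auto
qed

lemma oriented_gen_pairs: "\<forall>c\<in>D. vabs m c \<noteq> 0 \<Longrightarrow> oriented_pairs m (gen_pairs m a b D)"
  unfolding oriented_pairs_def using gen_pair_props(1-3) by blast

lemma gen_pair_W_deg_0:
  assumes "(\<mu>, \<nu>) \<in> gen_pairs m a b D" "\<forall>c\<in>D. vabs m c \<ge> 2" "W_deg m \<mu> = 0"
  obtains i j where "1 \<le> j" "j < i" "i \<le> m"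
    "\<mu> = Poly_Mapping.single (T j) (a j) + Xmon i" "\<nu> = Poly_Mapping.single (T i) (a i) + Xmon j"
  using assms Pcal_lhs_Xmon Pcal_rhs_Xmon
  unfolding gen_pairs_def W_deg_def
  by (auto simp: lookup_X_Pcal_lhs lookup_Pc_lhs le_Suc_eq)

lemma gen_pair_W_deg_ge_2:
  assumes "(\<mu>, \<nu>) \<in> gen_pairs m a b D" "W_deg m \<mu> \<ge> 2"
  obtains c where "c \<in> D" "\<mu> = Pc_lhs m a b c" "\<nu> = Pc_rhs m a b c"
  using assms unfolding gen_pairs_def W_deg_def
  by (auto simp: lookup_X_Pcal_lhs lookup_single when_def split: if_splits)

lemma gen_pair_W_deg_cases:
  assumes "(\<mu>, \<nu>) \<in> gen_pairs m a b D"
  shows "W_deg m \<mu> \<le> 1 \<or> (\<exists>c\<in>D. W_deg m \<mu> = vabs m c)"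
  using assms unfolding gen_pairs_def by (auto simp: W_deg_def lookup_Pc_lhs lookup_X_Pcal_lhs lookup_single when_def)

lemma mono_step_gen_pairs:
  assumes "mono_step m (gen_pairs m a b D) x y" "\<forall>c\<in>D. vabs m c \<noteq> 0"
  shows "X_weight m y < X_weight m x" "W_deg m y \<le> W_deg m x"
  using assms gen_pair_props[OF _ assms(2)] unfolding mono_step_def
  by (auto simp: X_weight_add W_deg_add)

section \<open>Confluence of the reduction by an initial segment of C\<close>

lemma exponent_shift:
  assumes "1 \<le> l" "l < i" "i \<le> m" "c l \<noteq> 0"
  shows vabs_exponent_shift: "vabs m (c(i := c i + 1, l := c l - 1)) = vabs m c"
    and tau'_less_exponent_shift: "tau'_less m (c(i := c i + 1, l := c l - 1)) c"
    and in_Nm_exponent_shift: "in_Nm m c \<Longrightarrow> in_Nm m (c(i := c i + 1, l := c l - 1))"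
proof -
  define c' where "c' = c(i := c i + 1, l := c l - 1)"
  have split: "sum f {1..m} = f i + f l + sum f ({1..m} - {i} - {l})" for f :: "nat \<Rightarrow> nat"
    using sum.remove[of "{1..m}" i f] sum.remove[of "{1..m} - {i}" l f] assms(1-3) by auto
  have "sum c' ({1..m} - {i} - {l}) = sum c ({1..m} - {i} - {l})"
    unfolding c'_def by (rule sum.cong) auto
  then show "vabs m c' = vabs m c"
    unfolding vabs_def split[of c'] split[of c] using assms by (simp add: c'_def)
  then show "tau'_less m c' c"
    unfolding tau'_less_def c'_def using assms by (intro disjI2 conjI bexI[of _ i]) auto
  show "in_Nm m c \<Longrightarrow> in_Nm m c'"
    unfolding in_Nm_def c'_def using assms by auto
qed

lemma Gamma0_Pc_overlap_reduces:
  assumes il: "1 \<le> l" "l < i" "i \<le> m"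
    and \<mu>A: "\<mu>A = Poly_Mapping.single (T l) (a l) + Xmon i"
    and \<nu>A: "\<nu>A = Poly_Mapping.single (T i) (a i) + Xmon l"
    and overlap: "vabs m c * b l < c l * a l"
  defines "c' \<equiv> c(i := c i + 1, l := c l - 1)"
    and "xA \<equiv> mono_lcm \<mu>A (Pc_lhs m a b c) - \<mu>A + \<nu>A"
    and "xP \<equiv> mono_lcm \<mu>A (Pc_lhs m a b c) - Pc_lhs m a b c + Pc_rhs m a b c"
  shows "xA = (xA - Pc_lhs m a b c') + Pc_lhs m a b c'" "xP = (xA - Pc_lhs m a b c') + Pc_rhs m a b c'"
proof -
  define k where "k = vabs m c"
  have "c l \<noteq> 0"
    using overlap by (cases "c l") auto
  have vk: "vabs m c' = k"
    unfolding c'_def k_def using il \<open>c l \<noteq> 0\<close> by (rule vabs_exponent_shift)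
  have c'i: "c' i = c i + 1" and c'l: "c' l = c l - 1" and c't: "\<And>t. t \<noteq> i \<Longrightarrow> t \<noteq> l \<Longrightarrow> c' t = c t"
    unfolding c'_def using il by auto
  have ci_mult: "c' i * a i = c i * a i + a i"
    using c'i by simp
  have cl_mult: "c' l * a l = c l * a l - a l" "a l \<le> c l * a l"
    using c'l \<open>c l \<noteq> 0\<close> by (simp_all add: diff_mult_distrib)
  have pointwise: "Poly_Mapping.lookup (Pc_lhs m a b c') w \<le> Poly_Mapping.lookup xA w \<and>
      Poly_Mapping.lookup xA w - Poly_Mapping.lookup (Pc_lhs m a b c') w + Poly_Mapping.lookup (Pc_rhs m a b c') w
        = Poly_Mapping.lookup xP w" for w
  proof (cases w)
    case (T t)
    consider "t = l" | "t = i" | "t \<noteq> l" "t \<noteq> i"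
      by blast
    then show ?thesis
      unfolding xA_def xP_def mono_lcm_def \<mu>A \<nu>A T using il overlap
      by cases (simp_all add: lookup_add lookup_minus lookup_single when_def lookup_Pc_lhs lookup_Pc_rhs
          vk ci_mult cl_mult c't k_def[symmetric], arith+)
  next
    case (X s)
    consider "s = l" | "s = i" | "s \<noteq> l" "s \<noteq> i"
      by blast
    then show ?thesis
      unfolding xA_def xP_def mono_lcm_def \<mu>A \<nu>A X using il \<open>c l \<noteq> 0\<close>
      by cases (simp_all add: lookup_add lookup_minus lookup_single when_def lookup_Pc_lhs lookup_Pc_rhs
          vk c'i c'l c't k_def[symmetric])
  next
    case Zv
    then show ?thesis
      unfolding xA_def xP_def mono_lcm_def \<mu>A \<nu>A
      by (simp add: lookup_add lookup_minus lookup_single lookup_Pc_lhs lookup_Pc_rhs)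
  qed
  then show "xA = (xA - Pc_lhs m a b c') + Pc_lhs m a b c'" "xP = (xA - Pc_lhs m a b c') + Pc_rhs m a b c'"
    by (auto intro!: poly_mapping_eqI simp: lookup_add lookup_minus)
qed

(* phi stands for the Rees map on monomials; the uniqueness of C-normal forms in its fibres is
   all that is used of the Groebner basis hypothesis on C. *)
locale rees_reduction =
  fixes m :: nat and a b :: "nat \<Rightarrow> nat" and C D :: "(nat \<Rightarrow> nat) set"
    and \<phi> :: "mono \<Rightarrow> 'r::comm_monoid_mult"
  assumes C_sub: "\<forall>c\<in>C. in_Nm m c \<and> vabs m c \<ge> 2"
    and C_closed: "\<forall>c\<in>C. \<forall>c'. in_Nm m c' \<and> vabs m c' \<ge> 2 \<and> tau'_less m c' c \<longrightarrow> c' \<in> C"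
    and D_sub: "D \<subseteq> C"
    and D_closed: "\<forall>c\<in>D. \<forall>c'\<in>C. tau'_less m c' c \<longrightarrow> c' \<in> D"
    and \<phi>_add: "\<And>x y. \<phi> (x + y) = \<phi> x * \<phi> y"
    and \<phi>_gen_pairs: "\<And>\<mu> \<nu>. (\<mu>, \<nu>) \<in> gen_pairs m a b C \<Longrightarrow> \<phi> \<mu> = \<phi> \<nu>"
    and C_normal_forms_unique: "\<And>y z. S_mono m y \<Longrightarrow> S_mono m z \<Longrightarrow> \<phi> y = \<phi> z \<Longrightarrow>
      \<forall>w. \<not> mono_step m (gen_pairs m a b C) y w \<Longrightarrow> \<forall>w. \<not> mono_step m (gen_pairs m a b C) z w \<Longrightarrow> y = z"
begin

abbreviation C_step :: "mono \<Rightarrow> mono \<Rightarrow> bool" where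
  "C_step \<equiv> mono_step m (gen_pairs m a b C)"

abbreviation D_step :: "mono \<Rightarrow> mono \<Rightarrow> bool" where
  "D_step \<equiv> mono_step m (gen_pairs m a b D)"

lemma C_nonzero: "\<forall>c\<in>C. vabs m c \<noteq> 0"
  using C_sub by fastforce

lemma D_nonzero: "\<forall>c\<in>D. vabs m c \<noteq> 0"
  using C_nonzero D_sub by blast

lemma \<phi>_C_step: "C_step x y \<Longrightarrow> \<phi> x = \<phi> y"
  unfolding mono_step_def using \<phi>_add \<phi>_gen_pairs by force

definition D_contains_up_to :: "nat \<Rightarrow> bool" where
  "D_contains_up_to w \<longleftrightarrow> (\<forall>c\<in>C. vabs m c \<le> w \<longrightarrow> c \<in> D)"

lemma D_contains_up_to_1: "D_contains_up_to 1"
  unfolding D_contains_up_to_def using C_sub by fastforce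

lemma D_contains_up_to_W_deg:
  assumes "(\<mu>, \<nu>) \<in> gen_pairs m a b D"
  shows "D_contains_up_to (W_deg m \<mu> - 1)"
  using gen_pair_W_deg_cases[OF assms]
proof
  assume "W_deg m \<mu> \<le> 1"
  then show ?thesis
    using D_contains_up_to_1 unfolding D_contains_up_to_def by auto
next
  assume "\<exists>c\<in>D. W_deg m \<mu> = vabs m c"
  then obtain c where "c \<in> D" "W_deg m \<mu> = vabs m c"
    by blast
  moreover have "tau'_less m c' c" if "vabs m c' \<le> vabs m c - 1" "c' \<in> C" for c'
    using that C_sub D_sub \<open>c \<in> D\<close> unfolding tau'_less_def by fastforce
  ultimately show ?thesis
    using D_closed unfolding D_contains_up_to_def by auto
qed

(* P_c is divisible by W^|c|, so it only applies to monomials of W-degree at least |c|. *)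
lemma C_step_is_D_step:
  assumes "C_step y z" "W_deg m y \<le> w" "D_contains_up_to w"
  shows "D_step y z"
proof -
  obtain \<mu> \<nu> t where step: "(\<mu>, \<nu>) \<in> gen_pairs m a b C" "S_mono m t" "y = t + \<mu>" "z = t + \<nu>"
    using assms(1) unfolding mono_step_def by blast
  have "c \<in> D" if "c \<in> C" "\<mu> = Pc_lhs m a b c" for c
    using that assms(2,3) step(3) W_deg_Pc_lhs[of m a b c]
    unfolding D_contains_up_to_def by (auto simp: W_deg_add)
  then have "(\<mu>, \<nu>) \<in> gen_pairs m a b D"
    using step(1) unfolding gen_pairs_def by blast
  then show ?thesis
    using step(2-4) by (blast intro: mono_stepI)
qed

lemma C_normal_form_by_D_steps:
  assumes "S_mono m y" "W_deg m y \<le> w" "D_contains_up_to w"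
  shows "\<exists>y'. D_step\<^sup>*\<^sup>* y y' \<and> (\<forall>z. \<not> C_step y' z) \<and> \<phi> y' = \<phi> y \<and> S_mono m y'"
  using assms(1,2)
proof (induction y rule: measure_induct_rule[of "X_weight m"])
  case (less y)
  show ?case
  proof (cases "\<exists>z. C_step y z")
    case True
    then obtain z where z: "C_step y z"
      by blast
    have "S_mono m z" "X_weight m z < X_weight m y" "W_deg m z \<le> W_deg m y"
      using z mono_step_gen_pairs[OF z C_nonzero] gen_pair_props(2)[OF _ C_nonzero]
      unfolding mono_step_def by (auto intro: S_mono_add)
    then obtain y' where "D_step\<^sup>*\<^sup>* z y'" "\<forall>z'. \<not> C_step y' z'" "\<phi> y' = \<phi> z" "S_mono m y'"
      using less.IH less.prems(2) by fastforce
    moreover have "D_step y z"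
      using C_step_is_D_step[OF z less.prems(2) assms(3)] .
    ultimately show ?thesis
      using \<phi>_C_step[OF z] by (metis converse_rtranclp_into_rtranclp)
  qed (use less.prems in blast)
qed

lemma joinable_if_same_\<phi>_low_W_deg:
  assumes "S_mono m y" "S_mono m z" "\<phi> y = \<phi> z" "W_deg m y \<le> w" "W_deg m z \<le> w" "D_contains_up_to w"
  shows "joinable D_step y z"
proof -
  obtain y' where y': "D_step\<^sup>*\<^sup>* y y'" "\<forall>w. \<not> C_step y' w" "\<phi> y' = \<phi> y" "S_mono m y'"
    using C_normal_form_by_D_steps[OF assms(1,4,6)] by blast
  obtain z' where z': "D_step\<^sup>*\<^sup>* z z'" "\<forall>w. \<not> C_step z' w" "\<phi> z' = \<phi> z" "S_mono m z'"
    using C_normal_form_by_D_steps[OF assms(2,5,6)] by blast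
  have "y' = z'"
    using C_normal_forms_unique[OF y'(4) z'(4)] y'(2,3) z'(2,3) assms(3) by simp
  then show ?thesis
    unfolding joinable_def using y'(1) z'(1) by blast
qed

lemma critical_pair_joinable_low_W_deg:
  assumes p1: "(\<mu>1, \<nu>1) \<in> gen_pairs m a b D" and p2: "(\<mu>2, \<nu>2) \<in> gen_pairs m a b D"
    and "W_deg m \<mu>2 - W_deg m \<mu>1 \<le> w" "W_deg m \<mu>1 - W_deg m \<mu>2 \<le> w" "D_contains_up_to w"
  shows "joinable D_step (mono_lcm \<mu>1 \<mu>2 - \<mu>1 + \<nu>1) (mono_lcm \<mu>1 \<mu>2 - \<mu>2 + \<nu>2)"
proof -
  let ?l = "mono_lcm \<mu>1 \<mu>2"
  have "(\<mu>1, \<nu>1) \<in> gen_pairs m a b C" "(\<mu>2, \<nu>2) \<in> gen_pairs m a b C"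
    using p1 p2 gen_pairs_mono[OF D_sub] by blast+
  then have "\<phi> (?l - \<mu>1 + \<nu>1) = \<phi> ?l" "\<phi> (?l - \<mu>2 + \<nu>2) = \<phi> ?l"
    using \<phi>_add \<phi>_gen_pairs mono_lcm_minus_add by metis+
  moreover have "S_mono m (?l - \<mu>1 + \<nu>1)" "S_mono m (?l - \<mu>2 + \<nu>2)"
    using gen_pair_props(1,2)[OF p1 D_nonzero] gen_pair_props(1,2)[OF p2 D_nonzero]
    unfolding mono_lcm_def by (intro S_mono_add S_mono_diff; simp)+
  moreover have "W_deg m (?l - \<mu>1 + \<nu>1) = W_deg m \<mu>2 - W_deg m \<mu>1"
    "W_deg m (?l - \<mu>2 + \<nu>2) = W_deg m \<mu>1 - W_deg m \<mu>2"
    using gen_pair_props(5)[OF p1 D_nonzero] gen_pair_props(5)[OF p2 D_nonzero]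
    unfolding mono_lcm_def W_deg_def by (simp_all add: lookup_add lookup_minus)
  ultimately show ?thesis
    using assms(3-5) by (intro joinable_if_same_\<phi>_low_W_deg) auto
qed

lemma Gamma0_Pc_critical_pair_step:
  assumes il: "1 \<le> l" "l < i" "i \<le> m" and "c \<in> D"
    and \<mu>A: "\<mu>A = Poly_Mapping.single (T l) (a l) + Xmon i"
    and \<nu>A: "\<nu>A = Poly_Mapping.single (T i) (a i) + Xmon l"
    and overlap: "\<not> (\<forall>v. Poly_Mapping.lookup \<mu>A v = 0 \<or> Poly_Mapping.lookup (Pc_lhs m a b c) v = 0)"
  shows "D_step (mono_lcm \<mu>A (Pc_lhs m a b c) - \<mu>A + \<nu>A)
    (mono_lcm \<mu>A (Pc_lhs m a b c) - Pc_lhs m a b c + Pc_rhs m a b c)"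
proof -
  define c' where "c' = c(i := c i + 1, l := c l - 1)"
  define xA where "xA = mono_lcm \<mu>A (Pc_lhs m a b c) - \<mu>A + \<nu>A"
  obtain v where v: "Poly_Mapping.lookup \<mu>A v \<noteq> 0" "Poly_Mapping.lookup (Pc_lhs m a b c) v \<noteq> 0"
    using overlap by blast
  then have "v = T l"
    using il unfolding \<mu>A by (auto simp: lookup_add lookup_single when_def lookup_Pc_lhs split: if_splits)
  then have lower: "vabs m c * b l < c l * a l"
    using v(2) il by (simp add: lookup_Pc_lhs)
  then have "c l \<noteq> 0"
    by (cases "c l") auto
  have "c \<in> C" "in_Nm m c" "vabs m c \<ge> 2"
    using \<open>c \<in> D\<close> D_sub C_sub by auto
  then have "c' \<in> C"
    using C_closed exponent_shift[where c = c, OF il \<open>c l \<noteq> 0\<close>] unfolding c'_def by auto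
  then have "c' \<in> D"
    using D_closed \<open>c \<in> D\<close> tau'_less_exponent_shift[where c = c, OF il \<open>c l \<noteq> 0\<close>] unfolding c'_def by blast
  then have "(Pc_lhs m a b c', Pc_rhs m a b c') \<in> gen_pairs m a b D"
    unfolding gen_pairs_def by blast
  moreover have "S_mono m (xA - Pc_lhs m a b c')"
  proof -
    have "(Pc_lhs m a b c, Pc_rhs m a b c) \<in> gen_pairs m a b D"
      using \<open>c \<in> D\<close> unfolding gen_pairs_def by blast
    moreover have "S_mono m \<mu>A" "S_mono m \<nu>A"
      unfolding \<mu>A \<nu>A using il by (auto intro!: S_mono_add S_mono_single_T S_mono_single_X)
    ultimately show ?thesis
      unfolding xA_def mono_lcm_def using gen_pair_props(1)[OF _ D_nonzero]
      by (intro S_mono_diff S_mono_add) auto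
  qed
  ultimately show ?thesis
    using mono_stepI Gamma0_Pc_overlap_reduces[where a = a and b = b and c = c, OF il \<mu>A \<nu>A lower] unfolding c'_def xA_def by metis
qed

lemma Gamma0_Pc_critical_pair_joinable:
  assumes p1: "(\<mu>1, \<nu>1) \<in> gen_pairs m a b D" and p2: "(\<mu>2, \<nu>2) \<in> gen_pairs m a b D"
    and "W_deg m \<mu>1 = 0" "W_deg m \<mu>2 \<ge> 2"
    and "\<not> (\<forall>v. Poly_Mapping.lookup \<mu>1 v = 0 \<or> Poly_Mapping.lookup \<mu>2 v = 0)"
  shows "joinable D_step (mono_lcm \<mu>1 \<mu>2 - \<mu>1 + \<nu>1) (mono_lcm \<mu>1 \<mu>2 - \<mu>2 + \<nu>2)"
proof -
  have "\<forall>c\<in>D. vabs m c \<ge> 2"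
    using C_sub D_sub by blast
  then obtain i l where "1 \<le> l" "l < i" "i \<le> m"
    "\<mu>1 = Poly_Mapping.single (T l) (a l) + Xmon i" "\<nu>1 = Poly_Mapping.single (T i) (a i) + Xmon l"
    using gen_pair_W_deg_0[OF p1 _ assms(3)] by blast
  moreover obtain c where "c \<in> D" "\<mu>2 = Pc_lhs m a b c" "\<nu>2 = Pc_rhs m a b c"
    using gen_pair_W_deg_ge_2[OF p2 assms(4)] by blast
  ultimately show ?thesis
    using Gamma0_Pc_critical_pair_step assms(5) r_into_joinable by metis
qed

lemma critical_pair_joinable:
  assumes p1: "(\<mu>1, \<nu>1) \<in> gen_pairs m a b D" and p2: "(\<mu>2, \<nu>2) \<in> gen_pairs m a b D"
  shows "joinable D_step (mono_lcm \<mu>1 \<mu>2 - \<mu>1 + \<nu>1) (mono_lcm \<mu>1 \<mu>2 - \<mu>2 + \<nu>2)"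
proof (cases "\<forall>v. Poly_Mapping.lookup \<mu>1 v = 0 \<or> Poly_Mapping.lookup \<mu>2 v = 0")
  case True
  then show ?thesis
    using coprime_critical_pair_joinable[OF p1 p2 oriented_gen_pairs[OF D_nonzero]] by blast
next
  case overlap: False
  define w where "w = max 1 (max (W_deg m \<mu>1 - 1) (W_deg m \<mu>2 - 1))"
  consider (Gamma0_Pc) "W_deg m \<mu>1 = 0" "W_deg m \<mu>2 \<ge> 2" | (Pc_Gamma0) "W_deg m \<mu>2 = 0" "W_deg m \<mu>1 \<ge> 2"
    | (low) "W_deg m \<mu>2 - W_deg m \<mu>1 \<le> w" "W_deg m \<mu>1 - W_deg m \<mu>2 \<le> w"
    unfolding w_def by linarith
  then show ?thesis
  proof cases
    case Gamma0_Pc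
    then show ?thesis
      using Gamma0_Pc_critical_pair_joinable[OF p1 p2] overlap by blast
  next
    case Pc_Gamma0
    moreover have "\<not> (\<forall>v. Poly_Mapping.lookup \<mu>2 v = 0 \<or> Poly_Mapping.lookup \<mu>1 v = 0)"
      using overlap by (simp add: disj_commute)
    ultimately show ?thesis
      using Gamma0_Pc_critical_pair_joinable[OF p2 p1] joinable_sym mono_lcm_commute by metis
  next
    case low
    have "D_contains_up_to w"
      using D_contains_up_to_1 D_contains_up_to_W_deg[OF p1] D_contains_up_to_W_deg[OF p2]
      unfolding w_def max_def by simp
    then show ?thesis
      using critical_pair_joinable_low_W_deg[OF p1 p2 low] by blast
  qed
qed

lemma D_step_locally_confluent: "D_step x y \<Longrightarrow> D_step x z \<Longrightarrow> joinable D_step y z"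
  using oriented_gen_pairs[OF D_nonzero] critical_pair_joinable
  by (rule critical_pairs_local_confluence)

lemma groebner_basis_D:
  "is_groebner_basis m (binomials (gen_pairs m a b D)) (ideal_S m (binomials (gen_pairs m a b D)) :: 'k::field mpoly set)"
  using oriented_gen_pairs[OF D_nonzero] mono_step_gen_pairs(1)[OF _ D_nonzero] D_step_locally_confluent
  by (rule binomials_groebner_basis)

end

definition mono_eval :: "(var \<Rightarrow> ('k::field) mpoly) \<Rightarrow> mono \<Rightarrow> 'k mpoly" where
  "mono_eval \<sigma> \<alpha> = (\<Prod>v\<in>Poly_Mapping.keys \<alpha>. \<sigma> v ^ Poly_Mapping.lookup \<alpha> v)"

lemma mono_eval_superset:
  assumes "finite A" "Poly_Mapping.keys \<alpha> \<subseteq> A"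
  shows "mono_eval \<sigma> \<alpha> = (\<Prod>v\<in>A. \<sigma> v ^ Poly_Mapping.lookup \<alpha> v)"
  unfolding mono_eval_def by (rule prod.mono_neutral_left[OF assms]) (auto simp: in_keys_iff)

lemma mono_eval_add: "mono_eval \<sigma> (\<alpha> + \<beta>) = mono_eval \<sigma> \<alpha> * mono_eval \<sigma> \<beta>"
proof -
  define A where "A = Poly_Mapping.keys \<alpha> \<union> Poly_Mapping.keys \<beta>"
  have "finite A" "Poly_Mapping.keys \<alpha> \<subseteq> A" "Poly_Mapping.keys \<beta> \<subseteq> A" "Poly_Mapping.keys (\<alpha> + \<beta>) \<subseteq> A"
    unfolding A_def using keys_add[of \<alpha> \<beta>] by auto
  then show ?thesis
    by (simp add: mono_eval_superset lookup_add power_add prod.distrib)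
qed

lemma subst_binom:
  fixes \<sigma> :: "var \<Rightarrow> 'k::field mpoly"
  assumes "\<mu> \<noteq> \<nu>"
  shows "subst \<sigma> (binom \<mu> \<nu>) = mono_eval \<sigma> \<mu> - mono_eval \<sigma> \<nu>"
proof -
  have "Poly_Mapping.lookup (binom \<mu> \<nu> :: 'k mpoly) \<mu> = 1" "Poly_Mapping.lookup (binom \<mu> \<nu> :: 'k mpoly) \<nu> = -1"
    using assms unfolding binom_def monom_def by (simp_all add: lookup_minus lookup_single)
  then show ?thesis
    unfolding subst_def keys_binom[OF assms] mono_eval_def using assms by (simp add: single_uminus)
qed

lemma binom_in_rees_L_iff:
  assumes "S_mono m y" "S_mono m z" "y \<noteq> z"
  shows "(binom y z :: 'k::field mpoly) \<in> rees_L m a b \<longleftrightarrow>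
    mono_eval (rees_sigma m a b) y = (mono_eval (rees_sigma m a b) z :: 'k mpoly)"
  using binom_in_S_ring[OF assms(1,2), where 'k='k] subst_binom[OF assms(3), where 'k='k]
  unfolding rees_L_def by simp

lemma rees_reduction_if_groebner:
  fixes C D :: "(nat \<Rightarrow> nat) set"
  assumes C_sub: "\<forall>c\<in>C. in_Nm m c \<and> vabs m c \<ge> 2"
    and C_closed: "\<forall>c\<in>C. \<forall>c'. in_Nm m c' \<and> vabs m c' \<ge> 2 \<and> tau'_less m c' c \<longrightarrow> c' \<in> C"
    and groebner: "is_groebner_basis m (Gamma0 m a b \<union> {Pc m a b c | c. c \<in> C}) (rees_L m a b :: 'k::field mpoly set)"
    and "D \<subseteq> C" "\<forall>c\<in>D. \<forall>c'\<in>C. tau'_less m c' c \<longrightarrow> c' \<in> D"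
  shows "rees_reduction m a b C D (mono_eval (rees_sigma m a b) :: mono \<Rightarrow> 'k mpoly)"
proof
  let ?\<phi> = "mono_eval (rees_sigma m a b) :: mono \<Rightarrow> 'k mpoly"
  have C_nonzero: "\<forall>c\<in>C. vabs m c \<noteq> 0"
    using C_sub by fastforce
  have groebner': "is_groebner_basis m (binomials (gen_pairs m a b C)) (rees_L m a b :: 'k mpoly set)"
    using groebner by (simp add: binomials_gen_pairs)
  show "?\<phi> \<mu> = ?\<phi> \<nu>" if "(\<mu>, \<nu>) \<in> gen_pairs m a b C" for \<mu> \<nu>
  proof -
    have "(binom \<mu> \<nu> :: 'k mpoly) \<in> rees_L m a b"
      using groebner' that unfolding is_groebner_basis_def binomials_def by force
    moreover have "\<mu> \<noteq> \<nu>"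
      using gen_pair_props(3)[OF that C_nonzero] lex_less_irrefl by metis
    ultimately show ?thesis
      using binom_in_rees_L_iff gen_pair_props(1,2)[OF that C_nonzero] by blast
  qed
  show "y = z" if yz: "S_mono m y" "S_mono m z" "?\<phi> y = ?\<phi> z"
    "\<forall>w. \<not> mono_step m (gen_pairs m a b C) y w" "\<forall>w. \<not> mono_step m (gen_pairs m a b C) z w" for y z
  proof (rule ccontr)
    assume "y \<noteq> z"
    have "(binom y z :: 'k mpoly) \<in> rees_L m a b" "(binom z y :: 'k mpoly) \<in> rees_L m a b"
      using binom_in_rees_L_iff[OF yz(1,2) \<open>y \<noteq> z\<close>, where a = a and b = b and 'k = 'k]
        binom_in_rees_L_iff[OF yz(2,1) \<open>y \<noteq> z\<close>[symmetric], where a = a and b = b and 'k = 'k] yz(3)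
      by simp_all
    note reducible = reducible_if_binom_in_groebner_ideal[OF oriented_gen_pairs[OF C_nonzero] groebner']
    consider "lex_less m z y" | "lex_less m y z"
      using lex_less_total[OF yz(1,2) \<open>y \<noteq> z\<close>] by blast
    then show False
    proof cases
      case 1
      then show False
        using reducible[OF \<open>binom y z \<in> rees_L m a b\<close> yz(1,2)] yz(4) by blast
    next
      case 2
      then show False
        using reducible[OF \<open>binom z y \<in> rees_L m a b\<close> yz(2,1)] yz(5) by blast
    qed
  qed
qed (fact assms(1,2,4,5) mono_eval_add)+

lemma set_take_downward_closed:
  assumes "sorted_wrt r xs" "\<And>x y. r x y \<Longrightarrow> \<not> r y x"
    and "x \<in> set (take j xs)" "y \<in> set xs" "r y x"
  shows "y \<in> set (take j xs)"
proof -
  obtain p where p: "p < j" "p < length xs" "x = xs ! p"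
    using assms(3) by (auto simp: in_set_conv_nth)
  obtain q where q: "q < length xs" "y = xs ! q"
    using assms(4) by (auto simp: in_set_conv_nth)
  have "\<not> p < q"
    using sorted_wrt_nth_less[OF assms(1) _ q(1)] p(3) q(2) assms(2,5) by blast
  then have "q < min j (length xs)"
    using p q(1) by linarith
  then show ?thesis
    using q(2) by (auto simp: in_set_conv_nth intro!: exI[of _ q])
qed

lemma tau'_less_asym:
  assumes "tau'_less m c c'"
  shows "\<not> tau'_less m c' c"
proof
  assume "tau'_less m c' c"
  then have "vabs m c = vabs m c'"
    using assms unfolding tau'_less_def by linarith
  then obtain i0 i1 where i0: "i0 \<in> {1..m}" "c i0 > c' i0" "\<forall>i\<in>{i0<..m}. c i = c' i"
    and i1: "i1 \<in> {1..m}" "c' i1 > c i1" "\<forall>i\<in>{i1<..m}. c' i = c i"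
    using assms \<open>tau'_less m c' c\<close> unfolding tau'_less_def by auto
  consider "i0 < i1" | "i0 = i1" | "i1 < i0"
    by linarith
  then show False
  proof cases
    case 1
    then show False
      using i0(3) i1(1,2) by fastforce
  next
    case 2
    then show False
      using i0(2) i1(2) by simp
  next
    case 3
    then show False
      using i1(3) i0(1,2) by fastforce
  qed
qed

theorem proposition3p1:
  fixes m :: nat and a b :: "nat \<Rightarrow> nat" and C :: "(nat \<Rightarrow> nat) set"
    and cs :: "(nat \<Rightarrow> nat) list"
  assumes m3: "m \<ge> 3"
    and ab: "\<forall>i\<in>{1..m}. b i < a i"
    and b2: "card {i\<in>{1..m}. b i \<noteq> 0} \<ge> 2"
    and Cfin: "finite C"
    and Csub: "\<forall>c\<in>C. in_Nm m c \<and> vabs m c \<ge> 2"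
    and Cgb: "is_groebner_basis m (Gamma0 m a b \<union> {Pc m a b c | c. c \<in> C})
                (rees_L m a b :: ('k::field) mpoly set)"
    and Cclosed: "\<forall>c\<in>C. \<forall>c'. in_Nm m c' \<and> vabs m c' \<ge> 2 \<and> tau'_less m c' c \<longrightarrow> c' \<in> C"
    and cs_set: "set cs = C"
    and cs_sorted: "sorted_wrt (tau'_less m) cs"
  shows "\<forall>j\<le>length cs.
           is_groebner_basis m (Gamma0 m a b \<union> {Pc m a b (cs ! i) | i. i < j})
             (ideal_S m (Gamma0 m a b \<union> {Pc m a b (cs ! i) | i. i < j}) :: 'k mpoly set)"
proof (intro allI impI)
  fix j
  assume "j \<le> length cs"
  define D where "D = set (take j cs)"
  have "rees_reduction m a b C D (mono_eval (rees_sigma m a b) :: mono \<Rightarrow> 'k mpoly)"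
    using Csub Cclosed Cgb
  proof (rule rees_reduction_if_groebner)
    show "D \<subseteq> C"
      unfolding D_def cs_set[symmetric] by (rule set_take_subset)
    show "\<forall>c\<in>D. \<forall>c'\<in>C. tau'_less m c' c \<longrightarrow> c' \<in> D"
      unfolding D_def cs_set[symmetric] using set_take_downward_closed[OF cs_sorted tau'_less_asym] by blast
  qed
  then have "is_groebner_basis m (binomials (gen_pairs m a b D))
      (ideal_S m (binomials (gen_pairs m a b D)) :: 'k mpoly set)"
    by (rule rees_reduction.groebner_basis_D)
  moreover have "{Pc m a b (cs ! i) | i. i < j} = ({Pc m a b c | c. c \<in> D} :: 'k mpoly set)"
    using \<open>j \<le> length cs\<close> unfolding D_def by (force simp: in_set_conv_nth)
  ultimately show "is_groebner_basis m (Gamma0 m a b \<union> {Pc m a b (cs ! i) | i. i < j})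
      (ideal_S m (Gamma0 m a b \<union> {Pc m a b (cs ! i) | i. i < j}) :: 'k mpoly set)"
    unfolding binomials_gen_pairs by simp
qed

end
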